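(* Let the data $\eta,Q_g,\Psi,c_{max},\theta_s$ be as in the context, and let the pyrolysis heat satisfy $Q_p>0$. Let $c_{min}\in(c_{max},0)$ be the unique value with $\theta_s(c_{min})=\frac{Q_p}{Q_g+Q_p}$. Then there exists exactly one $c\in[c_{max},0]$ for which the interface problem (P$_c$) described in the context admits a solution $\theta$, and this $c$ belongs to the interval $(c_{max},c_{min})$.
   Context: Dimensionless travelling-wave formulation of a solid-propellant combustion model ($x<0$ inert solid, $x>0$ gas, interface at $x=0$; $\theta$ dimensionless temperature; $c<0$ dimensionless regression velocity). Data: $\eta>0$; gas reaction heat $Q_g>0$; pyrolysis heat $Q_p\in\mathbb R$; $\Psi:[0,1]\to[0,\infty)$ of class $C^\infty$ with $\Psi(\theta)>0$ for $\theta\in[0,1)$ and $\Psi(1)=0$; a number $c_{max}<0$ and a surface-temperature map $\theta_s:[c_{max},0]\to[0,1]$ (inverse of a pyrolysis law with cut-off at the initial temperature) that is continuous and strictly decreasing with $\theta_s(0)=0$, $\theta_s(c_{max})=1$, and $C^\infty$ on $[c_{max},0)$ with $\theta_s'(c)<0$ there. Define $S(c):=\eta\,\frac{Q_p}{Q_p+Q_g}\,c$. For $c\in[c_{max},0]$, problem (P$_c$) asks for $\theta:\mathbb R\to[0,1]$, continuous, of class $C^2$ on $(-\infty,0]$ and on $[0,\infty)$ (one-sided derivatives at $0$), such that $\theta''+c\theta'=0$ for $x<0$; $\theta''+\eta c\theta'=-\Psi(\theta)$ for $x>0$; $\theta(x)\to0$ as $x\to-\infty$, $\theta(0)=\theta_s(c)$,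 $\theta(x)\to1$ as $x\to+\infty$, $\theta'(x)\to0$ as $x\to\pm\infty$; and the interface heat balance $\theta'(0^+)-\eta\,\theta'(0^-)=S(c)$. *)

theory Defs
  imports "HOL-Analysis.Analysis"
begin

definition smooth_real :: "(real \<Rightarrow> real) \<Rightarrow> bool" where
  "smooth_real g \<longleftrightarrow> (\<forall>k::nat. \<forall>x. ((deriv ^^ k) g) differentiable (at x))"

definition smooth_on_open :: "real set \<Rightarrow> (real \<Rightarrow> real) \<Rightarrow> bool" where
  "smooth_on_open S g \<longleftrightarrow> (\<forall>k::nat. \<forall>x\<in>S. ((deriv ^^ k) g) differentiable (at x))"

definition S_term :: "real \<Rightarrow> real \<Rightarrow> real \<Rightarrow> real \<Rightarrow> real" where
  "S_term eta Qp Qg c = eta * (Qp / (Qp + Qg)) * c"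

text \<open>theta solves problem (P_c). The functions d1,d2 are the first and second
  (one-sided at 0) derivatives of theta on (-inf,0], and e1,e2 those on [0,inf).\<close>
definition solves_Pc ::
  "real \<Rightarrow> real \<Rightarrow> real \<Rightarrow> (real \<Rightarrow> real) \<Rightarrow> (real \<Rightarrow> real) \<Rightarrow> real \<Rightarrow> (real \<Rightarrow> real) \<Rightarrow> bool" where
  "solves_Pc eta Qg Qp Psi ths c theta \<longleftrightarrow>
     (\<forall>x. theta x \<in> {0..1}) \<and> continuous_on UNIV theta \<and>
     (\<exists>d1 d2 e1 e2.
        (\<forall>x\<le>0. (theta has_real_derivative d1 x) (at x within {..0})) \<and>
        (\<forall>x\<le>0. (d1 has_real_derivative d2 x) (at x within {..0})) \<and>
        continuous_on {..0} d2 \<and>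
        (\<forall>x\<ge>0. (theta has_real_derivative e1 x) (at x within {0..})) \<and>
        (\<forall>x\<ge>0. (e1 has_real_derivative e2 x) (at x within {0..})) \<and>
        continuous_on {0..} e2 \<and>
        (\<forall>x<0. d2 x + c * d1 x = 0) \<and>
        (\<forall>x>0. e2 x + eta * c * e1 x = - Psi (theta x)) \<and>
        (theta \<longlongrightarrow> 0) at_bot \<and>
        theta 0 = ths c \<and>
        (theta \<longlongrightarrow> 1) at_top \<and>
        (d1 \<longlongrightarrow> 0) at_bot \<and>
        (e1 \<longlongrightarrow> 0) at_top \<and>
        e1 0 - eta * d1 0 = S_term eta Qp Qg c)"

end

theory Submission
  imports Defs
begin

text \<open>
  For \<open>c < 0\<close> the solid side of a solution is forced to be \<open>\<theta>\<^sub>s(c) exp (-c x)\<close>, and the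
  interface balance then fixes the slope \<open>\<theta>'(0\<^sup>+) = \<kappa> (\<theta>\<^sub>s(c) - r)\<close>, where \<open>\<kappa> = -\<eta> c\<close>
  and \<open>r = Q\<^sub>p / (Q\<^sub>g + Q\<^sub>p)\<close>. So \<open>(P\<^sub>c)\<close> amounts to an orbit of \<open>\<theta>' = p\<close>,
  \<open>p' = \<kappa> p - \<Psi>(\<theta>)\<close> from \<open>(\<theta>\<^sub>s(c), \<kappa> (\<theta>\<^sub>s(c) - r))\<close> that stays in the strip
  \<open>0 < p\<close>, \<open>\<theta> < 1\<close> and tends to the rest point \<open>(1, 0)\<close>.

  Existence is by shooting in \<open>c\<close>: for \<open>c\<^sub>m\<^sub>a\<^sub>x\<close> the orbit starts at \<open>\<theta> = 1\<close> with
  \<open>p > 0\<close> and overshoots \<open>\<theta> = 1\<close>, for \<open>c\<^sub>m\<^sub>i\<^sub>n\<close> it starts with \<open>p = 0\<close>, \<open>\<theta> < 1\<close>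
  and undershoots into \<open>p < 0\<close>. Both events are open in \<open>c\<close> and exclude each other, so some
  speed in between does neither, and its orbit converges to \<open>(1, 0)\<close>.

  Uniqueness: admissible speeds \<open>c\<^sub>1 < c\<^sub>2\<close> would give orbits starting on lines
  \<open>p = \<kappa>\<^sub>i (\<theta> - r)\<close> with \<open>\<kappa>\<^sub>2 < \<kappa>\<^sub>1\<close> and \<open>\<theta>\<^sub>s(c\<^sub>2) < \<theta>\<^sub>s(c\<^sub>1)\<close>. As graphs
  \<open>p = P\<^sub>i(\<theta>)\<close> they solve \<open>P\<^sub>i' = \<kappa>\<^sub>i - \<Psi> / P\<^sub>i\<close>, so the gap \<open>P\<^sub>1 - P\<^sub>2\<close>, positive at
  \<open>\<theta>\<^sub>s(c\<^sub>1)\<close>, can only grow; but both \<open>P\<^sub>i\<close> tend to \<open>0\<close> at \<open>\<theta> = 1\<close>.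

  The gas-side system is solved globally by Picard iteration after extending \<open>\<Psi>\<close> to a
  globally Lipschitz function, and its orbits depend continuously on \<open>c\<close> by Gronwall's inequality.
\<close>

section \<open>Lipschitz ODEs: Picard iteration and Gronwall's inequality\<close>

primrec picard_iter :: "('a::banach \<Rightarrow> 'a) \<Rightarrow> 'a \<Rightarrow> nat \<Rightarrow> real \<Rightarrow> 'a" where
  "picard_iter F a 0 = (\<lambda>t. a)"
| "picard_iter F a (Suc n) = (\<lambda>t. a + integral {0..t} (\<lambda>s. F (picard_iter F a n s)))"

definition ode_sol :: "('a::banach \<Rightarrow> 'a) \<Rightarrow> 'a \<Rightarrow> real \<Rightarrow> 'a" where
  "ode_sol F a t = lim (\<lambda>n. picard_iter F a n t)"

declare picard_iter.simps(2) [simp del]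

lemma integral_power_from_0:
  fixes t :: real
  assumes "0 \<le> t"
  shows "integral {0..t} (\<lambda>s. s ^ n) = t ^ Suc n / Suc n"
proof -
  have "((\<lambda>s. s ^ n) has_integral t ^ Suc n / Suc n - 0 ^ Suc n / Suc n) {0..t}"
  proof (rule fundamental_theorem_of_calculus)
    show "((\<lambda>s. s ^ Suc n / Suc n) has_vector_derivative s ^ n) (at s within {0..t})" for s
      using DERIV_cdivide[OF DERIV_pow[of "Suc n" s], of "Suc n"]
      unfolding has_real_derivative_iff_has_vector_derivative[symmetric] by simp
  qed (use assms in auto)
  then show ?thesis
    by (simp add: integral_unique)
qed

context
  fixes F :: "'a::banach \<Rightarrow> 'a" and L :: real
  assumes lipschitz: "L-lipschitz_on UNIV F"
begin

lemma continuous_on_compose_field: "continuous_on S x \<Longrightarrow> continuous_on S (\<lambda>s. F (x s))"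
  using continuous_on_compose2[OF lipschitz_on_continuous_on[OF lipschitz]] by auto

lemma continuous_on_picard_iter: "continuous_on {0..T} (picard_iter F a n)"
proof (induction n)
  case 0
  show ?case
    by (simp add: continuous_on_const)
next
  case (Suc n)
  have "(\<lambda>s. F (picard_iter F a n s)) integrable_on {0..T}"
    by (intro integrable_continuous_interval continuous_on_compose_field Suc.IH)
  then show ?case
    unfolding picard_iter.simps(2) by (intro continuous_intros indefinite_integral_continuous_1)
qed

lemma picard_iter_Suc_diff_le:
  assumes "0 \<le> t"
  shows "norm (picard_iter F a (Suc n) t - picard_iter F a n t)
           \<le> norm (F a) * L ^ n * t ^ Suc n / fact (Suc n)"
  using assms
proof (induction n arbitrary: t)
  case 0
  then show ?case
    by (simp add: picard_iter.simps(2))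
next
  case (Suc n)
  let ?P = "picard_iter F a"
  have int: "(\<lambda>s. F (?P m s)) integrable_on {0..t}" for m
    by (intro integrable_continuous_interval continuous_on_compose_field continuous_on_picard_iter)
  have "?P (Suc (Suc n)) t - ?P (Suc n) t
      = integral {0..t} (\<lambda>s. F (?P (Suc n) s)) - integral {0..t} (\<lambda>s. F (?P n s))"
    by (simp only: picard_iter.simps(2)) simp
  then have diff: "?P (Suc (Suc n)) t - ?P (Suc n) t = integral {0..t} (\<lambda>s. F (?P (Suc n) s) - F (?P n s))"
    using integral_diff[OF int int] by simp
  have "norm (integral {0..t} (\<lambda>s. F (?P (Suc n) s) - F (?P n s)))
      \<le> integral {0..t} (\<lambda>s. (norm (F a) * L ^ Suc n / fact (Suc n)) * s ^ Suc n)"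
  proof (rule integral_norm_bound_integral)
    show "(\<lambda>s. F (?P (Suc n) s) - F (?P n s)) integrable_on {0..t}"
      using int[of "Suc n"] int[of n] by (rule integrable_diff)
    show "(\<lambda>s. (norm (F a) * L ^ Suc n / fact (Suc n)) * s ^ Suc n) integrable_on {0..t}"
      by (intro integrable_continuous_interval continuous_intros)
    fix s assume s: "s \<in> {0..t}"
    have "norm (F (?P (Suc n) s) - F (?P n s)) \<le> L * norm (?P (Suc n) s - ?P n s)"
      by (rule lipschitz_on_normD[OF lipschitz]) auto
    also have "\<dots> \<le> L * (norm (F a) * L ^ n * s ^ Suc n / fact (Suc n))"
      using Suc.IH[of s] s lipschitz_on_nonneg[OF lipschitz] by (intro mult_left_mono) auto
    finally show "norm (F (?P (Suc n) s) - F (?P n s)) \<le> (norm (F a) * L ^ Suc n / fact (Suc n)) * s ^ Suc n"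
      by (simp add: field_simps)
  qed
  also have "\<dots> = (norm (F a) * L ^ Suc n / fact (Suc n)) * (t ^ Suc (Suc n) / Suc (Suc n))"
    using Suc.prems by (simp only: integral_mult_right integral_power_from_0)
  also have "\<dots> = norm (F a) * L ^ Suc n * t ^ Suc (Suc n) / fact (Suc (Suc n))"
    by (simp add: fact_Suc[of "Suc n"] del: fact_Suc)
  finally show ?case
    unfolding diff .
qed

lemma uniform_limit_picard_iter:
  "uniform_limit {0..T} (picard_iter F a) (ode_sol F a) sequentially"
proof -
  let ?d = "\<lambda>i t. picard_iter F a (Suc i) t - picard_iter F a i t"
  have L: "0 \<le> L"
    using lipschitz by (rule lipschitz_on_nonneg)
  have "uniform_limit {0..T} (\<lambda>n t. \<Sum>i<n. ?d i t) (\<lambda>t. \<Sum>i. ?d i t) sequentially"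
  proof (rule Weierstrass_m_test)
    fix i t assume t: "t \<in> {0..T}"
    have num: "L ^ i * t ^ Suc i \<le> T * (L * T) ^ i"
      using t L mult_left_mono[OF power_mono[of t T "Suc i"], of "L ^ i"]
      by (simp add: power_mult_distrib mult_ac)
    have den: "(fact i :: real) \<le> fact (Suc i)"
      by (rule fact_mono) simp
    have "L ^ i * t ^ Suc i / fact (Suc i) \<le> T * (L * T) ^ i / fact i"
      by (rule frac_le[OF _ num _ den]) (use t L in auto)
    then have bound: "L ^ i * t ^ Suc i / fact (Suc i) \<le> T * ((L * T) ^ i / fact i)"
      by simp
    have "norm (?d i t) \<le> norm (F a) * (L ^ i * t ^ Suc i / fact (Suc i))"
      using picard_iter_Suc_diff_le[of t a i] t by (metis atLeastAtMost_iff mult.assoc times_divide_eq_right)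
    also have "\<dots> \<le> norm (F a) * (T * ((L * T) ^ i / fact i))"
      using bound by (rule mult_left_mono) simp
    finally show "norm (?d i t) \<le> (norm (F a) * T) * ((L * T) ^ i / fact i)"
      by (simp only: mult.assoc)
  next
    have "summable (\<lambda>i. (L * T) ^ i / fact i)"
      using summable_exp[of "L * T"] by (simp add: divide_inverse mult.commute)
    then show "summable (\<lambda>i. (norm (F a) * T) * ((L * T) ^ i / fact i))"
      by (rule summable_mult)
  qed
  then have "uniform_limit {0..T} (\<lambda>n t. a + (\<Sum>i<n. ?d i t)) (\<lambda>t. a + (\<Sum>i. ?d i t)) sequentially"
    by (intro uniform_limit_intros)
  then have lim: "uniform_limit {0..T} (picard_iter F a) (\<lambda>t. a + (\<Sum>i. ?d i t)) sequentially"
    by (simp add: sum_lessThan_telescope[of "\<lambda>i. picard_iter F a i _"])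
  have "ode_sol F a t = a + (\<Sum>i. ?d i t)" if "t \<in> {0..T}" for t
    unfolding ode_sol_def using tendsto_uniform_limitI[OF lim that] by (rule limI)
  then show ?thesis
    by (intro uniform_limit_cong'[THEN iffD1, OF _ _ lim]) auto
qed

lemma continuous_on_ode_sol: "continuous_on {0..T} (ode_sol F a)"
  by (rule uniform_limit_theorem[OF _ uniform_limit_picard_iter])
    (auto intro: always_eventually continuous_on_picard_iter)

lemma ode_sol_integral:
  assumes "0 \<le> t"
  shows "ode_sol F a t = a + integral {0..t} (\<lambda>s. F (ode_sol F a s))"
proof -
  have "uniform_limit {0..t} (\<lambda>n s. F (picard_iter F a n s)) (F \<circ> ode_sol F a) sequentially"
    by (rule uniform_limit_compose[OF uniform_limit_picard_iter lipschitz_on_uniformly_continuous[OF lipschitz]]) auto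
  then obtain I J where I: "\<And>n. ((\<lambda>s. F (picard_iter F a n s)) has_integral I n) {0..t}"
    and J: "((F \<circ> ode_sol F a) has_integral J) {0..t}" and IJ: "I \<longlonglongrightarrow> J"
    by (rule uniform_limit_integral) (auto intro: continuous_on_compose_field continuous_on_picard_iter)
  have "picard_iter F a (Suc n) t = a + I n" for n
    using integral_unique[OF I[of n]] by (simp add: picard_iter.simps(2))
  then have "(\<lambda>n. picard_iter F a (Suc n) t) \<longlonglongrightarrow> a + J"
    using IJ by (simp add: tendsto_add)
  moreover have "(\<lambda>n. picard_iter F a (Suc n) t) \<longlonglongrightarrow> ode_sol F a t"
    using LIMSEQ_Suc[OF tendsto_uniform_limitI[OF uniform_limit_picard_iter]] assms by auto
  ultimately show ?thesis
    using J LIMSEQ_unique by (auto simp: integral_unique o_def)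
qed

lemma ode_sol_0 [simp]: "ode_sol F a 0 = a"
  using ode_sol_integral[of 0] by simp

lemma ode_sol_has_vector_derivative:
  assumes "0 \<le> t"
  shows "(ode_sol F a has_vector_derivative F (ode_sol F a t)) (at t within {0..})"
proof -
  have "((\<lambda>u. a + integral {0..u} (\<lambda>s. F (ode_sol F a s))) has_vector_derivative F (ode_sol F a t))
      (at t within {0..t+1})"
    using assms by (auto intro!: derivative_eq_intros integral_has_vector_derivative
        continuous_on_compose_field continuous_on_ode_sol)
  then have "(ode_sol F a has_vector_derivative F (ode_sol F a t)) (at t within {0..t+1})"
    by (rule has_vector_derivative_transform_within[where d=1]) (use assms ode_sol_integral in auto)
  moreover have "at t within {0..t+1} = at t within {0..}"
    by (rule at_within_nhd[of _ "{..<t+1}"]) auto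
  ultimately show ?thesis
    by simp
qed

end

lemma gronwall_inequality:
  fixes u :: "real \<Rightarrow> real"
  assumes cont: "continuous_on {0..T} u" and L: "0 \<le> L"
    and bound: "\<And>t. t \<in> {0..T} \<Longrightarrow> u t \<le> A + L * integral {0..t} u"
    and t: "t \<in> {0..T}"
  shows "u t \<le> A * exp (L * t)"
proof -
  define v where "v s = exp (- L * s) * (A + L * integral {0..s} u)" for s
  have "v t \<le> v 0"
  proof (rule DERIV_nonpos_imp_decreasing_open[of 0 t v])
    fix s assume s: "0 < s" "s < t"
    have "((\<lambda>s. integral {0..s} u) has_real_derivative u s) (at s within {0..T})"
      by (rule integral_has_real_derivative[OF cont]) (use s t in auto)
    then have "((\<lambda>s. integral {0..s} u) has_real_derivative u s) (at s)"
      using at_within_interior[of s "{0..T}"] s t by auto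
    then have "(v has_real_derivative exp (- L * s) * L * (u s - (A + L * integral {0..s} u))) (at s)"
      unfolding v_def by (auto intro!: derivative_eq_intros simp: algebra_simps)
    moreover have "exp (- L * s) * L * (u s - (A + L * integral {0..s} u)) \<le> 0"
      using bound[of s] s t L by (intro mult_nonneg_nonpos) auto
    ultimately show "\<exists>y. (v has_real_derivative y) (at s) \<and> y \<le> 0"
      by blast
  next
    have "u integrable_on {0..t}"
      using t by (intro integrable_continuous_interval continuous_on_subset[OF cont]) auto
    then show "continuous_on {0..t} v"
      unfolding v_def by (intro continuous_intros indefinite_integral_continuous_1)
  qed (use t in auto)
  then have "A + L * integral {0..t} u \<le> A * exp (L * t)"
    unfolding v_def by (simp add: exp_minus field_simps)
  then show ?thesis
    using bound[OF t] by linarith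
qed

lemma ode_sol_perturbation:
  fixes F G :: "'a::banach \<Rightarrow> 'a"
  assumes lipF: "K-lipschitz_on UNIV F" and lipG: "L-lipschitz_on UNIV G"
    and close: "\<And>s. s \<in> {0..T} \<Longrightarrow> norm (F (ode_sol F a s) - G (ode_sol F a s)) \<le> \<delta>"
    and t: "t \<in> {0..T}"
  shows "norm (ode_sol F a t - ode_sol G b t) \<le> (norm (a - b) + \<delta> * T) * exp (L * t)"
proof (rule gronwall_inequality[OF _ lipschitz_on_nonneg[OF lipG] _ t])
  let ?x = "ode_sol F a" and ?y = "ode_sol G b"
  have cx: "continuous_on {0..T} ?x" and cy: "continuous_on {0..T} ?y"
    using continuous_on_ode_sol[OF lipF] continuous_on_ode_sol[OF lipG] by blast+
  then show cu: "continuous_on {0..T} (\<lambda>s. norm (?x s - ?y s))"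
    by (intro continuous_intros)
  fix s assume s: "s \<in> {0..T}"
  have cs: "continuous_on {0..s} ?x" "continuous_on {0..s} ?y"
    using s by (auto intro: continuous_on_subset[OF cx] continuous_on_subset[OF cy])
  have "?x s - ?y s = (a - b) + integral {0..s} (\<lambda>r. F (?x r) - G (?y r))"
    using s cs ode_sol_integral[OF lipF] ode_sol_integral[OF lipG]
    by (simp add: integral_diff integrable_continuous_interval continuous_on_compose_field[OF lipF]
        continuous_on_compose_field[OF lipG])
  also have "norm \<dots> \<le> norm (a - b) + integral {0..s} (\<lambda>r. \<delta> + L * norm (?x r - ?y r))"
  proof (rule order_trans[OF norm_triangle_ineq add_left_mono])
    show "norm (integral {0..s} (\<lambda>r. F (?x r) - G (?y r))) \<le> integral {0..s} (\<lambda>r. \<delta> + L * norm (?x r - ?y r))"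
    proof (rule integral_norm_bound_integral)
      show "(\<lambda>r. F (?x r) - G (?y r)) integrable_on {0..s}"
        using cs by (intro integrable_continuous_interval continuous_intros
            continuous_on_compose_field[OF lipF] continuous_on_compose_field[OF lipG])
      show "(\<lambda>r. \<delta> + L * norm (?x r - ?y r)) integrable_on {0..s}"
        using cs by (intro integrable_continuous_interval continuous_intros)
      fix r assume r: "r \<in> {0..s}"
      show "norm (F (?x r) - G (?y r)) \<le> \<delta> + L * norm (?x r - ?y r)"
        using close[of r] r s lipschitz_on_normD[OF lipG] by (intro norm_diff_triangle_le) auto
    qed
  qed
  also have "\<dots> = norm (a - b) + \<delta> * s + L * integral {0..s} (\<lambda>r. norm (?x r - ?y r))"
    using s cs by (simp add: integral_add integrable_continuous_interval continuous_intros)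
  also have "\<dots> \<le> norm (a - b) + \<delta> * T + L * integral {0..s} (\<lambda>r. norm (?x r - ?y r))"
    using s close[of 0] t by (auto intro!: mult_left_mono order_trans[OF norm_ge_zero])
  finally show "norm (?x s - ?y s) \<le> norm (a - b) + \<delta> * T + L * integral {0..s} (\<lambda>r. norm (?x r - ?y r))" .
qed

section \<open>Orbits of the gas-side travelling-wave system\<close>

lemma has_real_derivative_at_within_atLeast_interior:
  "(f has_real_derivative D) (at x within {a..}) \<Longrightarrow> a < x \<Longrightarrow> (f has_real_derivative D) (at x)"
  using at_within_interior[of x "{a..}"] by (simp add: interior_Ici)

lemma last_point_le:
  fixes f :: "real \<Rightarrow> real"
  assumes "continuous_on {a..b} f" "a \<le> b" "f a \<le> c"
  obtains w where "w \<in> {a..b}" "f w \<le> c" "\<And>t. t \<in> {w<..b} \<Longrightarrow> c < f t"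
proof -
  let ?S = "{x \<in> {a..b}. f x \<le> c}"
  have "closed ?S"
    using continuous_on_closed_Collect_le[OF assms(1) continuous_on_const] by simp
  moreover have "bdd_above ?S"
    by (rule bdd_aboveI[of _ b]) auto
  moreover have "?S \<noteq> {}"
    using assms by auto
  ultimately have "Sup ?S \<in> ?S"
    by (intro closed_contains_Sup)
  moreover have "c < f t" if "t \<in> {Sup ?S<..b}" for t
    using that \<open>Sup ?S \<in> ?S\<close> cSup_upper[OF _ \<open>bdd_above ?S\<close>, of t] by force
  ultimately show ?thesis
    using that by blast
qed

lemma first_point_le:
  fixes f :: "real \<Rightarrow> real"
  assumes "continuous_on {a..b} f" "a \<le> b" "f b \<le> c"
  obtains w where "w \<in> {a..b}" "f w \<le> c" "\<And>t. t \<in> {a..<w} \<Longrightarrow> c < f t"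
proof -
  let ?S = "{x \<in> {a..b}. f x \<le> c}"
  have "closed ?S"
    using continuous_on_closed_Collect_le[OF assms(1) continuous_on_const] by simp
  moreover have "bdd_below ?S"
    by (rule bdd_belowI[of _ a]) auto
  moreover have "?S \<noteq> {}"
    using assms by auto
  ultimately have "Inf ?S \<in> ?S"
    by (intro closed_contains_Inf)
  moreover have "c < f t" if "t \<in> {a..<Inf ?S}" for t
    using that \<open>Inf ?S \<in> ?S\<close> cInf_lower[OF _ \<open>bdd_below ?S\<close>, of t] by force
  ultimately show ?thesis
    using that by blast
qed

lemma nondecreasing_while_positive:
  fixes h :: "real \<Rightarrow> real"
  assumes cont: "continuous_on {a..} h" and pos: "0 < h a"
    and deriv: "\<And>s. a < s \<Longrightarrow> 0 < h s \<Longrightarrow> \<exists>D. (h has_real_derivative D) (at s) \<and> 0 \<le> D"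
    and s: "a \<le> s"
  shows "h a \<le> h s"
proof -
  have mono: "h a \<le> h w" if "a \<le> w" "\<And>t. a < t \<Longrightarrow> t < w \<Longrightarrow> 0 < h t" for w
  proof (rule DERIV_nonneg_imp_increasing_open[OF \<open>a \<le> w\<close>])
    show "continuous_on {a..w} h"
      by (rule continuous_on_subset[OF cont]) auto
  qed (use that deriv in auto)
  have "0 < h t" if t: "a \<le> t" for t
  proof (rule ccontr)
    assume "\<not> 0 < h t"
    moreover have "continuous_on {a..t} h"
      by (rule continuous_on_subset[OF cont]) auto
    ultimately obtain w where w: "w \<in> {a..t}" "h w \<le> 0" "\<And>r. r \<in> {a..<w} \<Longrightarrow> 0 < h r"
      using first_point_le[of a t h 0] t by auto
    then have "h a \<le> h w"
      by (intro mono) auto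
    then show False
      using pos w(2) by linarith
  qed
  then show ?thesis
    using mono[OF s] by simp
qed

text \<open>The gas-side equation \<open>\<theta>'' + \<eta> c \<theta>' = - \<Psi>(\<theta>)\<close> as a first-order system, with
  \<open>k = - \<eta> c\<close> and \<open>G\<close> an extension of \<open>\<Psi>\<close>.\<close>

locale wave_orbit =
  fixes \<theta> p :: "real \<Rightarrow> real" and k :: real and G :: "real \<Rightarrow> real"
  assumes theta_deriv: "\<And>x. 0 \<le> x \<Longrightarrow> (\<theta> has_real_derivative p x) (at x within {0..})"
    and p_deriv: "\<And>x. 0 \<le> x \<Longrightarrow> (p has_real_derivative k * p x - G (\<theta> x)) (at x within {0..})"
    and k_nonneg: "0 \<le> k" and G_nonneg: "\<And>y. 0 \<le> G y" and continuous_G: "continuous_on UNIV G"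
begin

lemma continuous_on_theta: "continuous_on {0..} \<theta>"
  using theta_deriv by (auto simp: continuous_on_eq_continuous_within intro: DERIV_continuous)

lemma continuous_on_p: "continuous_on {0..} p"
  using p_deriv by (auto simp: continuous_on_eq_continuous_within intro: DERIV_continuous)

lemma theta_deriv_at: "0 < x \<Longrightarrow> (\<theta> has_real_derivative p x) (at x)"
  by (rule has_real_derivative_at_within_atLeast_interior[OF theta_deriv]) auto

lemma p_deriv_at: "0 < x \<Longrightarrow> (p has_real_derivative k * p x - G (\<theta> x)) (at x)"
  by (rule has_real_derivative_at_within_atLeast_interior[OF p_deriv]) auto

lemma theta_mvt:
  assumes "0 \<le> x" "x < y"
  obtains z where "x < z" "z < y" "\<theta> y - \<theta> x = (y - x) * p z"
proof -
  have "continuous_on {x..y} \<theta>"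
    using assms by (intro continuous_on_subset[OF continuous_on_theta]) auto
  moreover have "\<theta> differentiable (at z)" if "x < z" for z
    using assms that theta_deriv_at[of z] by (auto simp: real_differentiable_def)
  ultimately obtain l z where z: "x < z" "z < y" and l: "(\<theta> has_real_derivative l) (at z)"
    and eq: "\<theta> y - \<theta> x = (y - x) * l"
    using MVT[OF assms(2)] by blast
  have "l = p z"
    using DERIV_unique[OF l theta_deriv_at] assms z by simp
  then show ?thesis
    using that z eq by blast
qed

lemma theta_lower_bound:
  assumes "0 \<le> x" "x \<le> y" "\<And>t. x < t \<Longrightarrow> t < y \<Longrightarrow> c \<le> p t"
  shows "\<theta> x + c * (y - x) \<le> \<theta> y"
proof (cases "x = y")
  case False
  then obtain z where z: "x < z" "z < y" and eq: "\<theta> y - \<theta> x = (y - x) * p z"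
    using theta_mvt assms by (metis order_le_less)
  have "c * (y - x) \<le> p z * (y - x)"
    using assms(2,3) z by (intro mult_right_mono) auto
  then show ?thesis
    using eq by (simp add: mult.commute)
qed simp

lemma theta_mono_on:
  "0 \<le> x \<Longrightarrow> x \<le> y \<Longrightarrow> (\<And>t. x < t \<Longrightarrow> t < y \<Longrightarrow> 0 \<le> p t) \<Longrightarrow> \<theta> x \<le> \<theta> y"
  using theta_lower_bound[of x y 0] by simp

lemma theta_antimono_on:
  assumes "0 \<le> x" "x \<le> y" "\<And>t. x < t \<Longrightarrow> t < y \<Longrightarrow> p t \<le> 0"
  shows "\<theta> y \<le> \<theta> x"
proof (cases "x = y")
  case False
  then obtain z where z: "x < z" "z < y" and eq: "\<theta> y - \<theta> x = (y - x) * p z"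
    using theta_mvt assms by (metis order_le_less)
  have "(y - x) * p z \<le> 0"
    using assms(3) z by (intro mult_nonneg_nonpos) auto
  then show ?thesis
    using eq by simp
qed simp

lemma theta_strict_mono_on:
  assumes "0 \<le> x" "x < y" "\<And>t. x < t \<Longrightarrow> t < y \<Longrightarrow> 0 < p t"
  shows "\<theta> x < \<theta> y"
proof -
  obtain z where z: "x < z" "z < y" and eq: "\<theta> y - \<theta> x = (y - x) * p z"
    using theta_mvt assms by metis
  have "0 < (y - x) * p z"
    using assms(3) z by (intro mult_pos_pos) auto
  then show ?thesis
    using eq by simp
qed

lemma theta_strict_antimono_on:
  assumes "0 \<le> x" "x < y" "\<And>t. x < t \<Longrightarrow> t < y \<Longrightarrow> p t < 0"
  shows "\<theta> y < \<theta> x"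
proof -
  obtain z where z: "x < z" "z < y" and eq: "\<theta> y - \<theta> x = (y - x) * p z"
    using theta_mvt assms by metis
  have "(y - x) * p z < 0"
    using assms(3) z by (intro mult_pos_neg) auto
  then show ?thesis
    using eq by simp
qed

text \<open>Variation of constants: \<open>exp (-k t) (p t - c)\<close> has derivative \<open>exp (-k t) (k c - G (\<theta> t))\<close>;
  the sign \<open>s = \<plusminus>1\<close> gives the two directions.\<close>

lemma p_minus_const_monotone:
  assumes "0 \<le> x" "x \<le> y" and sign: "\<And>t. x < t \<Longrightarrow> t < y \<Longrightarrow> 0 \<le> s * (k * c - G (\<theta> t))"
  shows "s * (exp (k * (y - x)) * (p x - c)) \<le> s * (p y - c)"
proof -
  let ?w = "\<lambda>t. s * (exp (- k * t) * (p t - c))"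
  have "?w x \<le> ?w y"
  proof (rule DERIV_nonneg_imp_increasing_open[OF assms(2)])
    fix t assume t: "x < t" "t < y"
    have "(?w has_real_derivative s * (exp (- k * t) * (k * c - G (\<theta> t)))) (at t)"
      using assms(1) t by (auto intro!: derivative_eq_intros p_deriv_at simp: algebra_simps)
    moreover have "0 \<le> s * (exp (- k * t) * (k * c - G (\<theta> t)))"
      using sign[OF t] by (simp add: mult.left_commute[of s])
    ultimately show "\<exists>D. (?w has_real_derivative D) (at t) \<and> 0 \<le> D"
      by blast
  next
    show "continuous_on {x..y} ?w"
      using assms(1) by (intro continuous_intros continuous_on_subset[OF continuous_on_p]) auto
  qed
  then have "exp (k * y) * ?w x \<le> exp (k * y) * ?w y"
    by (rule mult_left_mono) simp
  then show ?thesis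
    by (simp add: mult_exp_exp algebra_simps flip: exp_add)
qed

lemma p_exp_upper:
  assumes "0 \<le> x" "x \<le> y" "\<And>t. x < t \<Longrightarrow> t < y \<Longrightarrow> k * c \<le> G (\<theta> t)"
  shows "p y - c \<le> exp (k * (y - x)) * (p x - c)"
  using p_minus_const_monotone[of x y "-1" c] assms by simp

lemma p_exp_lower:
  assumes "0 \<le> x" "x \<le> y" "\<And>t. x < t \<Longrightarrow> t < y \<Longrightarrow> G (\<theta> t) \<le> k * c"
  shows "exp (k * (y - x)) * (p x - c) \<le> p y - c"
  using p_minus_const_monotone[of x y 1 c] assms by simp

lemma p_neg_persists:
  assumes "0 \<le> x" "p x < 0" "x \<le> t"
  shows "p t < 0"
proof -
  have "p t \<le> exp (k * (t - x)) * p x"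
    using p_exp_upper[of x t 0] assms G_nonneg by simp
  also have "\<dots> < 0"
    using assms(2) by (simp add: mult_pos_neg)
  finally show ?thesis .
qed

lemma theta_nonincreasing_after_p_neg:
  assumes "0 \<le> x" "p x < 0" "x \<le> t"
  shows "\<theta> t \<le> \<theta> x"
proof (rule theta_antimono_on)
  show "p s \<le> 0" if "x < s" for s
    using p_neg_persists[OF assms(1,2), of s] that by simp
qed (use assms in auto)

lemma p_nonneg_if_tendsto_0:
  assumes lim: "(p \<longlongrightarrow> 0) at_top" and x: "0 \<le> x"
  shows "0 \<le> p x"
proof (rule ccontr)
  assume "\<not> 0 \<le> p x"
  then have px: "p x < 0" by simp
  have "p t \<le> p x" if "x \<le> t" for t
  proof -
    have "p t \<le> exp (k * (t - x)) * p x"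
      using p_exp_upper[of x t 0] x that G_nonneg by simp
    also have "\<dots> \<le> p x"
      using px that k_nonneg by (simp add: mult_le_cancel_right2)
    finally show ?thesis .
  qed
  moreover obtain N where "\<And>t. N \<le> t \<Longrightarrow> p x < p t"
    using order_tendstoD(1)[OF lim px] by (auto simp: eventually_at_top_linorder)
  ultimately show False
    using max.cobounded1 max.cobounded2 not_le by metis
qed

lemma p_minus_k_theta_antimono:
  assumes "0 \<le> x"
  shows "p x - k * \<theta> x \<le> p 0 - k * \<theta> 0"
proof (rule DERIV_nonpos_imp_decreasing_open[of 0 x "\<lambda>t. p t - k * \<theta> t"])
  fix t assume t: "0 < t" "t < x"
  then have "((\<lambda>t. p t - k * \<theta> t) has_real_derivative - G (\<theta> t)) (at t)"
    by (auto intro!: derivative_eq_intros p_deriv_at theta_deriv_at)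
  then show "\<exists>D. ((\<lambda>t. p t - k * \<theta> t) has_real_derivative D) (at t) \<and> D \<le> 0"
    using G_nonneg by (intro exI) auto
qed (use assms in \<open>auto intro!: continuous_intros continuous_on_subset[OF continuous_on_p]
    continuous_on_subset[OF continuous_on_theta]\<close>)

lemma undershoot_start:
  assumes "\<theta> 0 < 1" "p 0 = 0" "0 < G (\<theta> 0)"
  shows "\<exists>x\<ge>0. p x < 0 \<and> \<theta> x < 1"
proof -
  obtain d where d: "0 < d" "\<And>h. 0 < h \<Longrightarrow> h < d \<Longrightarrow> p h < 0"
    using has_real_derivative_neg_dec_right[OF p_deriv[of 0]] assms by force
  have "\<forall>\<^sub>F h in at 0 within {0..}. \<theta> h < 1"
    using continuous_on_theta assms(1) by (auto simp: continuous_on_def intro: order_tendstoD)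
  then obtain d' where d': "0 < d'" "\<And>h. 0 < h \<Longrightarrow> h < d' \<Longrightarrow> \<theta> h < 1"
    by (auto simp: eventually_at dist_real_def)
  show ?thesis
    using d d' by (intro exI[of _ "min d d' / 2"]) auto
qed

lemma overshoot_start:
  assumes "\<theta> 0 = 1" "0 < p 0"
  shows "\<exists>y\<ge>0. 1 < \<theta> y"
proof -
  obtain d where "0 < d" "\<And>h. 0 < h \<Longrightarrow> h < d \<Longrightarrow> \<theta> 0 < \<theta> h"
    using has_real_derivative_pos_inc_right[OF theta_deriv[of 0]] assms by force
  then show ?thesis
    using assms by (intro exI[of _ "d / 2"]) auto
qed

context
  assumes G_above_1: "\<And>y. 1 \<le> y \<Longrightarrow> G y = 0"
begin

lemma p_pos_if_overshoot:
  assumes theta0: "\<theta> 0 \<le> 1" and y: "0 \<le> y" "1 < \<theta> y"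
  shows "0 < p y"
proof -
  have "continuous_on {0..y} \<theta>"
    by (rule continuous_on_subset[OF continuous_on_theta]) auto
  then obtain w where w: "w \<in> {0..y}" "\<theta> w \<le> 1" and above: "\<And>t. t \<in> {w<..y} \<Longrightarrow> 1 < \<theta> t"
    using last_point_le[of 0 y \<theta> 1] y(1) theta0 by blast
  have wy: "w < y"
    using w y by (cases "w = y") auto
  then obtain z where z: "w < z" "z < y" and eq: "\<theta> y - \<theta> w = (y - w) * p z"
    using theta_mvt w by auto
  have "0 < (y - w) * p z"
    using eq w(2) y(2) by linarith
  then have "0 < exp (k * (y - z)) * (p z - 0)"
    using wy by (simp add: zero_less_mult_iff)
  also have "\<dots> \<le> p y - 0"
  proof (rule p_exp_lower)
    show "G (\<theta> t) \<le> k * 0" if "z < t" "t < y" for t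
      using above[of t] G_above_1[of "\<theta> t"] that z by simp
  qed (use z w in auto)
  finally show ?thesis
    by simp
qed

lemma overshoot_persists:
  assumes theta0: "\<theta> 0 \<le> 1" and y: "0 \<le> y" "1 < \<theta> y" and t: "y \<le> t"
  shows "1 < \<theta> t"
proof -
  have "\<theta> y - 1 \<le> \<theta> t - 1"
  proof (rule nondecreasing_while_positive[where h="\<lambda>t. \<theta> t - 1"])
    show "continuous_on {y..} (\<lambda>t. \<theta> t - 1)"
      using y by (intro continuous_intros continuous_on_subset[OF continuous_on_theta]) auto
    fix s assume s: "y < s" "0 < \<theta> s - 1"
    then have "((\<lambda>t. \<theta> t - 1) has_real_derivative p s) (at s)"
      using y by (auto intro!: derivative_eq_intros theta_deriv_at)
    moreover have "0 < p s"
      using p_pos_if_overshoot[OF theta0, of s] s y by auto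
    ultimately show "\<exists>D. ((\<lambda>t. \<theta> t - 1) has_real_derivative D) (at s) \<and> 0 \<le> D"
      by (intro exI[of _ "p s"]) auto
  qed (use y t in auto)
  then show ?thesis
    using y by linarith
qed

lemma not_overshoot_and_undershoot:
  assumes "\<theta> 0 \<le> 1" "0 \<le> y" "1 < \<theta> y" and "0 \<le> x" "p x < 0" "\<theta> x < 1"
  shows False
proof -
  have "\<theta> (max x y) \<le> \<theta> x"
    by (rule theta_nonincreasing_after_p_neg[OF assms(4,5)]) simp
  moreover have "1 < \<theta> (max x y)"
    by (rule overshoot_persists[OF assms(1-3)]) simp
  ultimately show False
    using assms(6) by linarith
qed

context
  assumes G_pos: "\<And>y. y < 1 \<Longrightarrow> 0 < G y" and k_pos: "0 < k"
    and theta0: "0 \<le> \<theta> 0"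
    and no_overshoot: "\<And>y. 0 \<le> y \<Longrightarrow> \<theta> y \<le> 1"
    and no_undershoot: "\<And>x. 0 \<le> x \<Longrightarrow> \<theta> x < 1 \<Longrightarrow> 0 \<le> p x"
begin

lemma p_nonneg: "0 \<le> x \<Longrightarrow> 0 \<le> p x"
proof (rule ccontr)
  assume x: "0 \<le> x" and "\<not> 0 \<le> p x"
  then have px: "p x < 0"
    by simp
  then have "\<theta> x = 1"
    using no_undershoot no_overshoot x by force
  moreover have "\<theta> (x + 1) < \<theta> x"
    using x p_neg_persists[OF x px] by (intro theta_strict_antimono_on) auto
  ultimately show False
    using no_undershoot[of "x + 1"] p_neg_persists[OF x px, of "x + 1"] x by auto
qed

lemma theta_mono: "0 \<le> x \<Longrightarrow> x \<le> y \<Longrightarrow> \<theta> x \<le> \<theta> y"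
  using p_nonneg by (intro theta_mono_on) auto

lemma theta_in_unit_interval: "0 \<le> x \<Longrightarrow> \<theta> x \<in> {0..1}"
  using theta0 theta_mono[of 0 x] no_overshoot[of x] by auto

lemma theta_approaches_1:
  assumes e: "0 < e"
  shows "\<exists>N\<ge>0. 1 - e < \<theta> N"
proof (rule ccontr)
  assume "\<not> ?thesis"
  then have below: "\<theta> t \<le> 1 - e" if "0 \<le> t" for t
    using that by force
  obtain m where m: "0 < m" "\<And>t. 0 \<le> t \<Longrightarrow> m \<le> G (\<theta> t)"
  proof -
    have "{\<theta> 0..1 - e} \<noteq> {}"
      using below[of 0] by auto
    then obtain z where z: "z \<in> {\<theta> 0..1 - e}" "\<And>y. y \<in> {\<theta> 0..1 - e} \<Longrightarrow> G z \<le> G y"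
      using continuous_attains_inf[OF compact_Icc _ continuous_on_subset[OF continuous_G subset_UNIV]]
      by blast
    then show ?thesis
      using that[of "G z"] G_pos[of z] e below theta_mono[of 0] by auto
  qed
  show False
  proof (cases "\<exists>t\<^sub>0\<ge>0. p t\<^sub>0 < m / k")
    case True
    then obtain t\<^sub>0 where t0: "0 \<le> t\<^sub>0" "p t\<^sub>0 < m / k"
      by blast
    define d where "d = m / k - p t\<^sub>0"
    define T where "T = t\<^sub>0 + m / (k * k * d)"
    have d: "0 < d" and T: "t\<^sub>0 \<le> T"
      using t0 m k_pos by (auto simp: d_def T_def)
    have "p T - m / k \<le> exp (k * (T - t\<^sub>0)) * (- d)"
      using p_exp_upper[of t\<^sub>0 T "m / k"] t0 T m k_pos by (auto simp: d_def)
    also have "\<dots> \<le> (1 + k * (T - t\<^sub>0)) * (- d)"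
      using d by (intro mult_right_mono_neg exp_ge_add_one_self) auto
    also have "\<dots> = - d - m / k"
      using d k_pos by (simp add: T_def field_simps)
    finally show False
      using p_nonneg[of T] t0 T d by linarith
  next
    case False
    then have "\<theta> 0 + m / k * (2 * k / m - 0) \<le> \<theta> (2 * k / m)"
      using m k_pos by (intro theta_lower_bound) (auto simp: not_less)
    then show False
      using no_overshoot[of "2 * k / m"] theta0 m k_pos by simp
  qed
qed

lemma theta_tendsto_1: "(\<theta> \<longlongrightarrow> 1) at_top"
proof (rule tendstoI)
  fix e :: real assume "0 < e"
  then obtain N where N: "0 \<le> N" "1 - e < \<theta> N"
    using theta_approaches_1 by blast
  have "dist (\<theta> t) 1 < e" if "N \<le> t" for t
    using N that theta_mono[of N t] no_overshoot[of t] by (simp add: dist_real_def)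
  then show "\<forall>\<^sub>F t in at_top. dist (\<theta> t) 1 < e"
    by (auto simp: eventually_at_top_linorder)
qed

lemma p_tendsto_0: "(p \<longlongrightarrow> 0) at_top"
proof (rule tendstoI)
  fix e :: real assume e: "0 < e"
  have "((\<lambda>t. G (\<theta> t)) \<longlongrightarrow> G 1) at_top"
    using continuous_G theta_tendsto_1 by (auto simp: continuous_on_eq_continuous_at intro: isCont_tendsto_compose)
  then have "\<forall>\<^sub>F t in at_top. G (\<theta> t) < k * (e / 2)"
    using G_above_1[of 1] k_pos e by (intro order_tendstoD(2)) auto
  then obtain N where N: "\<And>t. N \<le> t \<Longrightarrow> G (\<theta> t) < k * (e / 2)"
    by (auto simp: eventually_at_top_linorder)
  show "\<forall>\<^sub>F t in at_top. dist (p t) 0 < e"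
  proof (rule ccontr)
    assume "\<not> ?thesis"
    then obtain t\<^sub>0 where "max N 0 \<le> t\<^sub>0" "\<not> dist (p t\<^sub>0) 0 < e"
      unfolding eventually_at_top_linorder by blast
    then have t0: "max N 0 \<le> t\<^sub>0" "e \<le> p t\<^sub>0"
      using p_nonneg[of t\<^sub>0] by (auto simp: dist_real_def)
    have "e \<le> p t" if "t\<^sub>0 \<le> t" for t
    proof -
      have "exp (k * (t - t\<^sub>0)) * (p t\<^sub>0 - e / 2) \<le> p t - e / 2"
        using t0 that N by (intro p_exp_lower) (auto intro: less_imp_le)
      moreover have "p t\<^sub>0 - e / 2 \<le> exp (k * (t - t\<^sub>0)) * (p t\<^sub>0 - e / 2)"
        using t0 that k_pos e by (intro mult_le_cancel_right1[THEN iffD2]) auto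
      ultimately show ?thesis
        using t0 by linarith
    qed
    then have "\<theta> t\<^sub>0 + e * (t\<^sub>0 + 2 / e - t\<^sub>0) \<le> \<theta> (t\<^sub>0 + 2 / e)"
      using t0 e by (intro theta_lower_bound) auto
    then show False
      using theta_in_unit_interval[of t\<^sub>0] no_overshoot[of "t\<^sub>0 + 2 / e"] t0 e by auto
  qed
qed

end

end

text \<open>The energy \<open>exp ((1 + M) t) ((1 - \<theta>)\<^sup>2 + p\<^sup>2)\<close> is nondecreasing, so an orbit
  in the unit strip cannot reach the rest point \<open>(1, 0)\<close> unless it starts there.\<close>

lemma energy_nondecreasing:
  assumes range: "\<And>t. 0 \<le> t \<Longrightarrow> \<theta> t \<in> {0..1}" and p_nonneg: "\<And>t. 0 \<le> t \<Longrightarrow> 0 \<le> p t"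
    and G_le: "\<And>y. y \<in> {0..1} \<Longrightarrow> G y \<le> M * (1 - y)" and M: "0 \<le> M" and x: "0 \<le> x"
  shows "(1 - \<theta> 0)\<^sup>2 + (p 0)\<^sup>2 \<le> exp ((1 + M) * x) * ((1 - \<theta> x)\<^sup>2 + (p x)\<^sup>2)"
proof -
  let ?E = "\<lambda>t. exp ((1 + M) * t) * ((1 - \<theta> t)\<^sup>2 + (p t)\<^sup>2)"
  have "?E 0 \<le> ?E x"
  proof (rule DERIV_nonneg_imp_increasing_open[OF x])
    fix t assume t: "0 < t" "t < x"
    let ?u = "1 - \<theta> t" and ?q = "p t" and ?g = "G (\<theta> t)"
    let ?X = "(1 + M) * (?u\<^sup>2 + ?q\<^sup>2) - 2 * ?u * ?q + 2 * ?q * (k * ?q - ?g)"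
    have "(?E has_real_derivative exp ((1 + M) * t) * ?X) (at t)"
      using t by (auto intro!: derivative_eq_intros theta_deriv_at p_deriv_at simp: algebra_simps power2_eq_square)
    moreover have "0 \<le> ?X"
    proof -
      have "?q * ?g \<le> ?q * (M * ?u)"
        using G_le[of "\<theta> t"] range[of t] p_nonneg[of t] t by (intro mult_left_mono) auto
      moreover have "0 \<le> (1 + M) * (?u - ?q)\<^sup>2 + 2 * k * ?q\<^sup>2"
        using M k_nonneg by simp
      ultimately show ?thesis
        by (simp add: power2_eq_square algebra_simps)
    qed
    ultimately show "\<exists>D. (?E has_real_derivative D) (at t) \<and> 0 \<le> D"
      by (intro exI[of _ "exp ((1 + M) * t) * ?X"]) simp
  next
    show "continuous_on {0..x} ?E"
      by (intro continuous_intros continuous_on_subset[OF continuous_on_theta]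
          continuous_on_subset[OF continuous_on_p]) auto
  qed
  then show ?thesis
    by simp
qed

context
  fixes M :: real
  assumes G_pos: "\<And>y. y < 1 \<Longrightarrow> 0 < G y" and G_le: "\<And>y. y \<in> {0..1} \<Longrightarrow> G y \<le> M * (1 - y)"
    and M: "0 \<le> M"
    and range: "\<And>t. 0 \<le> t \<Longrightarrow> \<theta> t \<in> {0..1}" and p_lim: "(p \<longlongrightarrow> 0) at_top"
    and not_rest: "\<not> (\<theta> 0 = 1 \<and> p 0 = 0)"
begin

lemma theta_lt_1: "0 \<le> x \<Longrightarrow> \<theta> x < 1"
proof (rule ccontr)
  assume x: "0 \<le> x" and "\<not> \<theta> x < 1"
  then have theta_x: "\<theta> x = 1"
    using range[OF x] by auto
  have "p x = 0"
  proof (cases "x = 0")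
    case True
    show ?thesis
    proof (rule ccontr)
      assume "p x \<noteq> 0"
      then have "0 < p 0"
        using p_nonneg_if_tendsto_0[OF p_lim, of 0] True by auto
      then obtain y where "0 \<le> y" "1 < \<theta> y"
        using overshoot_start theta_x True by blast
      then show False
        using range by fastforce
    qed
  next
    case False
    show ?thesis
      using x False theta_x range
      by (intro DERIV_local_max[OF theta_deriv_at, of x x]) (auto simp: abs_less_iff)
  qed
  then have "(1 - \<theta> 0)\<^sup>2 + (p 0)\<^sup>2 \<le> 0"
    using energy_nondecreasing[OF range p_nonneg_if_tendsto_0[OF p_lim] G_le M x] theta_x by simp
  then show False
    using not_rest by (simp add: sum_power2_le_zero_iff)
qed

lemma p_pos: "0 \<le> x \<Longrightarrow> 0 < p x"
proof (rule ccontr)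
  assume x: "0 \<le> x" and "\<not> 0 < p x"
  then have "p x = 0"
    using p_nonneg_if_tendsto_0[OF p_lim x] by simp
  then have "k * p x - G (\<theta> x) < 0"
    using G_pos[OF theta_lt_1[OF x]] by simp
  then obtain d where d: "0 < d" "\<And>h. 0 < h \<Longrightarrow> h < d \<Longrightarrow> p (x + h) < p x"
    using has_real_derivative_neg_dec_right[OF p_deriv[OF x]] x by force
  then have "p (x + d / 2) < 0"
    using \<open>p x = 0\<close> by simp
  then show False
    using p_nonneg_if_tendsto_0[OF p_lim, of "x + d / 2"] d x by simp
qed

end

context
  assumes pos: "\<And>x. 0 \<le> x \<Longrightarrow> 0 < p x \<and> \<theta> x < 1" and theta_lim: "(\<theta> \<longlongrightarrow> 1) at_top"
begin

abbreviation theta_inv :: "real \<Rightarrow> real" where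
  "theta_inv \<equiv> inv_into {0..} \<theta>"

lemma theta_less_iff: "0 \<le> x \<Longrightarrow> 0 \<le> y \<Longrightarrow> \<theta> x < \<theta> y \<longleftrightarrow> x < y"
proof -
  have mono: "\<theta> x < \<theta> y" if "0 \<le> x" "x < y" for x y
    using that pos by (intro theta_strict_mono_on) auto
  show "0 \<le> x \<Longrightarrow> 0 \<le> y \<Longrightarrow> \<theta> x < \<theta> y \<longleftrightarrow> x < y"
    using mono[of x y] mono[of y x] by (cases x y rule: linorder_cases) auto
qed

lemma inj_on_theta: "inj_on \<theta> {0..}"
proof (rule inj_onI)
  fix x y assume "x \<in> {0..}" "y \<in> {0..}" "\<theta> x = \<theta> y"
  then show "x = y"
    using theta_less_iff[of x y] theta_less_iff[of y x] by (cases x y rule: linorder_cases) auto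
qed

lemma theta_inv:
  assumes "\<theta> 0 \<le> y" "y < 1"
  shows "0 \<le> theta_inv y" "\<theta> (theta_inv y) = y"
proof -
  obtain X where X: "\<And>x. X \<le> x \<Longrightarrow> y < \<theta> x"
    using order_tendstoD(1)[OF theta_lim assms(2)] by (auto simp: eventually_at_top_linorder)
  have "\<exists>x. 0 \<le> x \<and> x \<le> max X 0 \<and> \<theta> x = y"
    using X[of "max X 0"] assms by (intro IVT' continuous_on_subset[OF continuous_on_theta]) auto
  then have "y \<in> \<theta> ` {0..}"
    by auto
  then show "0 \<le> theta_inv y" "\<theta> (theta_inv y) = y"
    using inv_into_into[of y \<theta> "{0..}"] f_inv_into_f[of y \<theta> "{0..}"] by auto
qed

lemma theta_inv_pos:
  assumes "\<theta> 0 < y" "y < 1"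
  shows "0 < theta_inv y"
proof -
  have "0 \<le> theta_inv y" "\<theta> (theta_inv y) = y"
    using theta_inv[of y] assms by auto
  moreover from calculation have "theta_inv y \<noteq> 0"
    using assms(1) by auto
  ultimately show ?thesis
    by simp
qed

lemma theta_inv_deriv:
  assumes y: "\<theta> 0 < y" "y < 1"
  shows "(theta_inv has_real_derivative inverse (p (theta_inv y))) (at y)"
proof (rule DERIV_inverse_function[where a="\<theta> 0" and b=1])
  let ?x = "theta_inv y"
  have x: "0 < ?x" "\<theta> ?x = y"
    using theta_inv_pos[OF y] theta_inv[of y] y by auto
  show "(\<theta> has_real_derivative p ?x) (at ?x)"
    using theta_deriv_at[OF x(1)] .
  show "p ?x \<noteq> 0"
    using pos[of ?x] x by auto
  show "\<theta> (theta_inv z) = z" if "\<theta> 0 < z" "z < 1" for z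
    using theta_inv[of z] that by auto
  have "isCont theta_inv (\<theta> ?x)"
  proof (rule isCont_inverse_function2[of "?x / 2" ?x "?x + 1"])
    show "theta_inv (\<theta> z) = z" if "?x / 2 \<le> z" "z \<le> ?x + 1" for z
      using that x inv_into_f_f[OF inj_on_theta] by auto
    show "isCont \<theta> z" if "?x / 2 \<le> z" "z \<le> ?x + 1" for z
      using that x theta_deriv_at[of z] by (auto intro: DERIV_isCont)
  qed (use x in auto)
  then show "isCont theta_inv y"
    using x by simp
qed (use y in auto)

text \<open>The orbit as a graph \<open>p = P(\<theta>)\<close> in the phase plane.\<close>

lemma profile_deriv:
  assumes "\<theta> 0 < y" "y < 1"
  shows "((\<lambda>y. p (theta_inv y)) has_real_derivative k - G y / p (theta_inv y)) (at y)"
proof -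
  let ?x = "theta_inv y"
  have x: "0 < ?x" "\<theta> ?x = y" "0 < p ?x"
    using theta_inv_pos[OF assms] theta_inv[of y] pos[of ?x] assms by auto
  have "((\<lambda>y. p (theta_inv y)) has_real_derivative (k * p ?x - G (\<theta> ?x)) * inverse (p ?x)) (at y)"
    by (rule DERIV_chain2[OF p_deriv_at[OF x(1)] theta_inv_deriv[OF assms]])
  then show ?thesis
    using x by (simp add: field_simps)
qed

lemma profile_tendsto_0:
  assumes "(p \<longlongrightarrow> 0) at_top"
  shows "((\<lambda>y. p (theta_inv y)) \<longlongrightarrow> 0) (at_left 1)"
proof -
  have "filterlim theta_inv at_top (at_left 1)"
    unfolding filterlim_at_top
  proof
    fix Z :: real
    have "\<theta> (max Z 0) < 1"
      using pos by simp
    then have "\<forall>\<^sub>F y in at_left 1. \<theta> (max Z 0) < y"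
      by (rule eventually_mono[OF eventually_at_left_real]) auto
    moreover have "\<forall>\<^sub>F y in at_left 1. y < (1::real)"
      by (simp add: eventually_at_filter)
    ultimately show "\<forall>\<^sub>F y in at_left 1. Z \<le> theta_inv y"
    proof eventually_elim
      case (elim y)
      have "\<theta> 0 \<le> \<theta> (max Z 0)"
        using theta_less_iff[of "max Z 0" 0] by auto
      then have "\<theta> (max Z 0) < \<theta> (theta_inv y)"
        using elim theta_inv[of y] by auto
      then show ?case
        using theta_less_iff[of "max Z 0" "theta_inv y"] theta_inv[of y] elim
          \<open>\<theta> 0 \<le> \<theta> (max Z 0)\<close> by auto
    qed
  qed
  then show ?thesis
    by (rule filterlim_compose[OF assms])
qed

lemma continuous_on_profile: "continuous_on {\<theta> 0<..<1} (\<lambda>y. p (theta_inv y))"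
  using profile_deriv by (intro continuous_at_imp_continuous_on ballI DERIV_isCont) auto

lemma profile_below_line:
  assumes "p 0 = k * (\<theta> 0 - r)" "\<theta> 0 \<le> y" "y < 1"
  shows "p (theta_inv y) \<le> k * (y - r)"
  using p_minus_k_theta_antimono[of "theta_inv y"] theta_inv[OF assms(2,3)] assms(1)
  by (simp add: algebra_simps)

lemma filterlim_theta_at_left_1: "filterlim \<theta> (at_left 1) at_top"
proof (rule tendsto_imp_filterlim_at_left[OF theta_lim])
  show "\<forall>\<^sub>F s in at_top. \<theta> s < 1"
    by (rule eventually_mono[OF eventually_ge_at_top[of 0]]) (use pos in auto)
qed

end

end

section \<open>Comparison of orbits\<close>

text \<open>Along the second orbit, the gap \<open>h\<close> to the phase-plane profile of the first one is
  positive at the start, because the first profile lies below its initial line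
  \<open>p = k\<^sub>1 (\<theta> - r)\<close>; it can only grow while positive, yet it tends to \<open>0\<close>.\<close>

lemma wave_orbit_comparison:
  assumes O1: "wave_orbit \<theta>\<^sub>1 p\<^sub>1 k\<^sub>1 G" and O2: "wave_orbit \<theta>\<^sub>2 p\<^sub>2 k\<^sub>2 G"
    and pos1: "\<And>x. 0 \<le> x \<Longrightarrow> 0 < p\<^sub>1 x \<and> \<theta>\<^sub>1 x < 1" and lim1: "(\<theta>\<^sub>1 \<longlongrightarrow> 1) at_top" "(p\<^sub>1 \<longlongrightarrow> 0) at_top"
    and pos2: "\<And>x. 0 \<le> x \<Longrightarrow> 0 < p\<^sub>2 x \<and> \<theta>\<^sub>2 x < 1" and lim2: "(\<theta>\<^sub>2 \<longlongrightarrow> 1) at_top" "(p\<^sub>2 \<longlongrightarrow> 0) at_top"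
    and init1: "p\<^sub>1 0 = k\<^sub>1 * (\<theta>\<^sub>1 0 - r)" and init2: "p\<^sub>2 0 = k\<^sub>2 * (\<theta>\<^sub>2 0 - r)"
    and k: "k\<^sub>1 < k\<^sub>2" and start: "\<theta>\<^sub>1 0 < \<theta>\<^sub>2 0" "r < \<theta>\<^sub>2 0"
  shows False
proof -
  interpret A: wave_orbit \<theta>\<^sub>1 p\<^sub>1 k\<^sub>1 G by (rule O1)
  interpret B: wave_orbit \<theta>\<^sub>2 p\<^sub>2 k\<^sub>2 G by (rule O2)
  let ?P = "\<lambda>y. p\<^sub>1 (inv_into {0..} \<theta>\<^sub>1 y)"
  define h where "h s = p\<^sub>2 s - ?P (\<theta>\<^sub>2 s)" for s
  have range: "\<theta>\<^sub>1 0 < \<theta>\<^sub>2 s \<and> \<theta>\<^sub>2 s < 1" if "0 \<le> s" for s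
    using B.theta_less_iff[OF pos2 lim2(1), of 0 s] pos2[OF that] start that by (cases "s = 0") auto
  have "?P (\<theta>\<^sub>2 0) \<le> k\<^sub>1 * (\<theta>\<^sub>2 0 - r)"
    using A.profile_below_line[OF pos1 lim1(1) init1] range[of 0] by simp
  also have "\<dots> < p\<^sub>2 0"
    unfolding init2 using k start by (intro mult_strict_right_mono) auto
  finally have h0: "0 < h 0"
    by (simp add: h_def)
  have mono: "h 0 \<le> h s" if "0 \<le> s" for s
  proof (rule nondecreasing_while_positive[of 0 h s])
    show "continuous_on {0..} h"
      unfolding h_def using range by (intro continuous_intros B.continuous_on_p
          continuous_on_compose2[OF A.continuous_on_profile[OF pos1 lim1(1)] B.continuous_on_theta]) auto
    fix s assume s: "0 < s" "0 < h s"
    let ?y = "\<theta>\<^sub>2 s"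
    have P: "0 < ?P ?y"
      using pos1 A.theta_inv[OF pos1 lim1(1), of ?y] range[of s] s by auto
    have "(h has_real_derivative k\<^sub>2 * p\<^sub>2 s - G ?y - (k\<^sub>1 - G ?y / ?P ?y) * p\<^sub>2 s) (at s)"
      unfolding h_def using s range[of s]
      by (intro DERIV_diff B.p_deriv_at DERIV_chain2[OF A.profile_deriv[OF pos1 lim1(1)] B.theta_deriv_at]) auto
    moreover have "k\<^sub>2 * p\<^sub>2 s - G ?y - (k\<^sub>1 - G ?y / ?P ?y) * p\<^sub>2 s = (k\<^sub>2 - k\<^sub>1) * p\<^sub>2 s + G ?y * h s / ?P ?y"
      using P unfolding h_def by (simp add: field_simps)
    moreover have "0 \<le> (k\<^sub>2 - k\<^sub>1) * p\<^sub>2 s + G ?y * h s / ?P ?y"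
      using k pos2[of s] s P B.G_nonneg[of ?y] by (intro add_nonneg_nonneg) auto
    ultimately show "\<exists>D. (h has_real_derivative D) (at s) \<and> 0 \<le> D"
      by auto
  qed (use h0 that in auto)
  have "((\<lambda>s. ?P (\<theta>\<^sub>2 s)) \<longlongrightarrow> 0) at_top"
    by (rule filterlim_compose[OF A.profile_tendsto_0[OF pos1 lim1] B.filterlim_theta_at_left_1[OF pos2 lim2(1)]])
  then have lim: "(h \<longlongrightarrow> 0 - 0) at_top"
    unfolding h_def by (intro tendsto_diff lim2(2))
  have "\<forall>\<^sub>F s in at_top. h 0 \<le> h s"
    using eventually_ge_at_top[of "0::real"] by (rule eventually_mono) (rule mono)
  then have "h 0 \<le> 0 - 0"
    by (rule tendsto_lowerbound[OF lim]) simp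
  then show False
    using h0 by simp
qed

section \<open>The travelling-wave system with a Lipschitz source\<close>

definition wave_field :: "real \<Rightarrow> (real \<Rightarrow> real) \<Rightarrow> real \<times> real \<Rightarrow> real \<times> real" where
  "wave_field k G z = (snd z, k * snd z - G (fst z))"

lemma lipschitz_on_wave_field:
  assumes lip: "M-lipschitz_on UNIV G"
  shows "(1 + \<bar>k\<bar> + M)-lipschitz_on UNIV (wave_field k G)"
proof (rule lipschitz_onI)
  fix z w :: "real \<times> real"
  let ?u = "\<bar>fst z - fst w\<bar>" and ?v = "\<bar>snd z - snd w\<bar>"
  have uv: "?u \<le> dist z w" "?v \<le> dist z w"
    using dist_fst_le[of z w] dist_snd_le[of z w] by (simp_all add: dist_real_def)
  have G: "\<bar>G (fst z) - G (fst w)\<bar> \<le> M * ?u"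
    using lipschitz_onD[OF lip] by (simp add: dist_real_def)
  have "dist (wave_field k G z) (wave_field k G w) \<le> ?v + \<bar>k * (snd z - snd w) - (G (fst z) - G (fst w))\<bar>"
    using norm_Pair_le[of "snd z - snd w" "k * snd z - G (fst z) - (k * snd w - G (fst w))"]
    by (simp add: wave_field_def dist_norm algebra_simps)
  also have "\<dots> \<le> ?v + \<bar>k\<bar> * ?v + M * ?u"
    using G abs_triangle_ineq4[of "k * (snd z - snd w)" "G (fst z) - G (fst w)"] by (simp add: abs_mult)
  also have "\<dots> \<le> (1 + \<bar>k\<bar> + M) * dist z w"
    using uv lipschitz_on_nonneg[OF lip] by (simp add: distrib_right add_mono mult_left_mono)
  finally show "dist (wave_field k G z) (wave_field k G w) \<le> (1 + \<bar>k\<bar> + M) * dist z w" .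
qed (use lipschitz_on_nonneg[OF lip] in simp)

lemma wave_orbit_ode_sol:
  assumes lip: "M-lipschitz_on UNIV G" and "0 \<le> k" "\<And>y. 0 \<le> G y"
  shows "wave_orbit (\<lambda>t. fst (ode_sol (wave_field k G) a t)) (\<lambda>t. snd (ode_sol (wave_field k G) a t)) k G"
proof -
  let ?z = "ode_sol (wave_field k G) a"
  have z: "(?z has_vector_derivative wave_field k G (?z x)) (at x within {0..})" if "0 \<le> x" for x
    using ode_sol_has_vector_derivative[OF lipschitz_on_wave_field[OF lip] that] .
  have "((\<lambda>t. fst (?z t)) has_real_derivative snd (?z x)) (at x within {0..})"
    and "((\<lambda>t. snd (?z t)) has_real_derivative k * snd (?z x) - G (fst (?z x))) (at x within {0..})"
    if "0 \<le> x" for x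
    using bounded_linear.has_vector_derivative[OF bounded_linear_fst z[OF that]]
      bounded_linear.has_vector_derivative[OF bounded_linear_snd z[OF that]]
    by (simp_all add: wave_field_def has_real_derivative_iff_has_vector_derivative)
  then show ?thesis
    using assms lipschitz_on_continuous_on[OF lip] by unfold_locales auto
qed

lemma dist_wave_ode_sol_le:
  assumes lip: "M-lipschitz_on UNIV G" and k: "\<bar>k - k\<^sub>0\<bar> \<le> 1"
    and B: "\<And>s. s \<in> {0..t} \<Longrightarrow> norm (ode_sol (wave_field k\<^sub>0 G) a\<^sub>0 s) \<le> B" and t: "0 \<le> t"
  shows "norm (ode_sol (wave_field k G) a t - ode_sol (wave_field k\<^sub>0 G) a\<^sub>0 t)
    \<le> (norm (a\<^sub>0 - a) + \<bar>k\<^sub>0 - k\<bar> * B * t) * exp ((2 + \<bar>k\<^sub>0\<bar> + M) * t)"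
proof -
  let ?x = "ode_sol (wave_field k\<^sub>0 G) a\<^sub>0"
  have L: "(2 + \<bar>k\<^sub>0\<bar> + M)-lipschitz_on UNIV (wave_field k G)"
    by (rule lipschitz_on_le[OF lipschitz_on_wave_field[OF lip]]) (use k in linarith)
  have close: "norm (wave_field k\<^sub>0 G (?x s) - wave_field k G (?x s)) \<le> \<bar>k\<^sub>0 - k\<bar> * B"
    if "s \<in> {0..t}" for s
  proof -
    have "wave_field k\<^sub>0 G z - wave_field k G z = (0, (k\<^sub>0 - k) * snd z)" for z
      by (simp add: wave_field_def algebra_simps)
    then have "norm (wave_field k\<^sub>0 G (?x s) - wave_field k G (?x s)) = \<bar>k\<^sub>0 - k\<bar> * \<bar>snd (?x s)\<bar>"
      by (simp add: abs_mult)
    also have "\<dots> \<le> \<bar>k\<^sub>0 - k\<bar> * B"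
      using B[OF that] norm_snd_le[of "snd (?x s)" "fst (?x s)"]
      by (intro mult_left_mono) (auto simp: norm_commute)
    finally show ?thesis .
  qed
  show ?thesis
    using ode_sol_perturbation[OF lipschitz_on_wave_field[OF lip] L close, of t] t
    by (simp add: norm_minus_commute)
qed

lemma continuous_on_wave_ode_sol_param:
  fixes k :: "real \<Rightarrow> real" and a :: "real \<Rightarrow> real \<times> real"
  assumes lip: "M-lipschitz_on UNIV G" and k: "continuous_on S k" and a: "continuous_on S a"
    and t: "0 \<le> t"
  shows "continuous_on S (\<lambda>c. ode_sol (wave_field (k c) G) (a c) t)"
  unfolding continuous_on_def
proof
  fix c\<^sub>0 assume c0: "c\<^sub>0 \<in> S"
  let ?x = "\<lambda>c. ode_sol (wave_field (k c) G) (a c)"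
  let ?bound = "\<lambda>B c. (norm (a c\<^sub>0 - a c) + \<bar>k c\<^sub>0 - k c\<bar> * B * t) * exp ((2 + \<bar>k c\<^sub>0\<bar> + M) * t)"
  have "bounded (?x c\<^sub>0 ` {0..t})"
    by (intro compact_imp_bounded compact_continuous_image compact_Icc
        continuous_on_ode_sol[OF lipschitz_on_wave_field[OF lip]])
  then obtain B where B: "\<And>s. s \<in> {0..t} \<Longrightarrow> norm (?x c\<^sub>0 s) \<le> B"
    unfolding bounded_iff by blast
  have lim_k: "(k \<longlongrightarrow> k c\<^sub>0) (at c\<^sub>0 within S)" and lim_a: "(a \<longlongrightarrow> a c\<^sub>0) (at c\<^sub>0 within S)"
    using k a c0 by (simp_all add: continuous_on_def)
  have "\<forall>\<^sub>F c in at c\<^sub>0 within S. dist (k c) (k c\<^sub>0) < 1"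
    using lim_k by (rule tendstoD) simp
  then have "\<forall>\<^sub>F c in at c\<^sub>0 within S. norm (?x c t - ?x c\<^sub>0 t) \<le> ?bound B c"
    by eventually_elim (use dist_wave_ode_sol_le[OF lip _ B t] in \<open>simp add: dist_real_def\<close>)
  moreover have "(?bound B \<longlongrightarrow> ?bound B c\<^sub>0) (at c\<^sub>0 within S)"
    using lim_k lim_a by (intro tendsto_intros)
  then have "(?bound B \<longlongrightarrow> 0) (at c\<^sub>0 within S)"
    by simp
  ultimately have "((\<lambda>c. ?x c t - ?x c\<^sub>0 t) \<longlongrightarrow> 0) (at c\<^sub>0 within S)"
    by (rule Lim_null_comparison)
  then show "((\<lambda>c. ?x c t) \<longlongrightarrow> ?x c\<^sub>0 t) (at c\<^sub>0 within S)"
    by (rule LIM_zero_cancel)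
qed

section \<open>The interface problem\<close>

lemma smooth_real_lipschitz_on_Icc:
  assumes "smooth_real g"
  obtains M where "M-lipschitz_on {a..b} g"
proof -
  have "((deriv ^^ 0) g) differentiable (at x)" "((deriv ^^ 1) g) differentiable (at x)" for x
    using assms unfolding smooth_real_def by blast+
  then have "g differentiable (at x)" "deriv g differentiable (at x)" for x
    by simp_all
  then have deriv: "(g has_derivative (\<lambda>h. deriv g x * h)) (at x within {a..b})" for x
    by (metis DERIV_deriv_iff_real_differentiable has_field_derivative_at_within has_field_derivative_def)
  have "continuous_on {a..b} (deriv g)"
    using \<open>\<And>x. deriv g differentiable (at x)\<close>
    by (auto intro: differentiable_imp_continuous_on differentiable_at_imp_differentiable_on)
  then obtain B where B: "\<And>x. x \<in> {a..b} \<Longrightarrow> \<bar>deriv g x\<bar> \<le> B"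
    using compact_imp_bounded[OF compact_continuous_image[OF _ compact_Icc]]
    by (force simp: bounded_iff)
  have onorm: "onorm (\<lambda>h. deriv g x * h) = \<bar>deriv g x\<bar>" for x
    using onorm_scaleR[OF bounded_linear_ident[where 'a=real], of "deriv g x"] onorm_id[where 'a=real]
    by simp
  have "(max B 0)-lipschitz_on {a..b} g"
  proof (rule bounded_derivative_imp_lipschitz[OF deriv])
    show "onorm (\<lambda>h. deriv g x * h) \<le> max B 0" if "x \<in> {a..b}" for x
      using B[OF that] onorm[of x] by linarith
  qed auto
  then show ?thesis
    by (rule that)
qed

lemma solid_side_flux:
  fixes \<theta> d1 d2 :: "real \<Rightarrow> real"
  assumes d\<theta>: "\<And>x. x \<le> 0 \<Longrightarrow> (\<theta> has_real_derivative d1 x) (at x within {..0})"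
    and dd: "\<And>x. x \<le> 0 \<Longrightarrow> (d1 has_real_derivative d2 x) (at x within {..0})"
    and eq: "\<And>x. x < 0 \<Longrightarrow> d2 x + c * d1 x = 0"
    and lim: "(\<theta> \<longlongrightarrow> 0) at_bot" "(d1 \<longlongrightarrow> 0) at_bot"
  shows "d1 0 = - c * \<theta> 0"
proof -
  define F where "F x = d1 x + c * \<theta> x" for x
  have cont: "continuous_on {..0} \<theta>" "continuous_on {..0} d1"
    using d\<theta> dd by (auto simp: continuous_on_eq_continuous_within intro: DERIV_continuous)
  have "F x = F 0" if x: "x < 0" for x
  proof (rule DERIV_isconst_end[OF x, symmetric])
    show "continuous_on {x..0} F"
      unfolding F_def
      by (intro continuous_intros continuous_on_subset[OF cont(1)] continuous_on_subset[OF cont(2)]) auto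
    fix t assume t: "x < t" "t < 0"
    have at: "at t within {..0} = at t"
      using t by (intro at_within_interior) auto
    have "(F has_real_derivative d2 t + c * d1 t) (at t)"
      unfolding F_def using d\<theta>[of t] dd[of t] t at by (auto intro!: derivative_eq_intros)
    then show "(F has_real_derivative 0) (at t)"
      using eq[of t] t by simp
  qed
  then have "\<forall>\<^sub>F x in at_bot. F x = F 0"
    by (auto simp: eventually_at_bot_dense)
  then have "(F \<longlongrightarrow> F 0) at_bot"
    by (rule tendsto_eventually)
  moreover have "(F \<longlongrightarrow> 0 + c * 0) at_bot"
    unfolding F_def by (intro tendsto_intros lim)
  ultimately have "F 0 = 0"
    using tendsto_unique[OF trivial_limit_at_bot_linorder] by force
  then show ?thesis
    unfolding F_def by simp
qed

lemma continuous_on_atLeast_eq_at_0: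
  fixes f g :: "real \<Rightarrow> real"
  assumes "continuous_on {0..} f" "continuous_on {0..} g" "\<And>x. 0 < x \<Longrightarrow> f x = g x"
  shows "f 0 = g 0"
proof -
  have "(f \<longlongrightarrow> f 0) (at_right 0)" "(g \<longlongrightarrow> g 0) (at_right 0)"
    using assms(1,2) by (auto simp: continuous_on_def intro: tendsto_within_subset)
  moreover have "\<forall>\<^sub>F x in at_right 0. f x = g x"
    using assms(3) by (auto simp: eventually_at_filter)
  ultimately show ?thesis
    using tendsto_unique[OF trivial_limit_at_right_real] tendsto_cong by metis
qed

lemma solves_PcI:
  fixes theta v v' w w' :: "real \<Rightarrow> real"
  assumes "\<And>x. theta x \<in> {0..1}" "continuous_on UNIV theta"
    and "\<And>x. x \<le> 0 \<Longrightarrow> (theta has_real_derivative v x) (at x within {..0})"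
    and "\<And>x. x \<le> 0 \<Longrightarrow> (v has_real_derivative v' x) (at x within {..0})"
    and "continuous_on {..0} v'"
    and "\<And>x. 0 \<le> x \<Longrightarrow> (theta has_real_derivative w x) (at x within {0..})"
    and "\<And>x. 0 \<le> x \<Longrightarrow> (w has_real_derivative w' x) (at x within {0..})"
    and "continuous_on {0..} w'"
    and "\<And>x. x < 0 \<Longrightarrow> v' x + c * v x = 0"
    and "\<And>x. 0 < x \<Longrightarrow> w' x + eta * c * w x = - Psi (theta x)"
    and "(theta \<longlongrightarrow> 0) at_bot" "theta 0 = ths c" "(theta \<longlongrightarrow> 1) at_top"
    and "(v \<longlongrightarrow> 0) at_bot" "(w \<longlongrightarrow> 0) at_top"
    and "w 0 - eta * v 0 = S_term eta Qp Qg c"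
  shows "solves_Pc eta Qg Qp Psi ths c theta"
  unfolding solves_Pc_def
  by (intro conjI allI impI exI[where x=v] exI[where x=v'] exI[where x=w] exI[where x=w']) (use assms in auto)

text \<open>On the solid side every solution is \<open>\<theta>\<^sub>s(c) exp (-c x)\<close>, so solving \<open>(P\<^sub>c)\<close>
  amounts to solving the gas-side problem with the slope at \<open>0\<close> fixed by the interface balance.\<close>

lemma solves_Pc_glue:
  fixes \<theta> p q :: "real \<Rightarrow> real"
  assumes c: "c < 0" "ths c \<in> {0..1}" and range: "\<And>x. 0 \<le> x \<Longrightarrow> \<theta> x \<in> {0..1}"
    and d\<theta>: "\<And>x. 0 \<le> x \<Longrightarrow> (\<theta> has_real_derivative p x) (at x within {0..})"
    and dp: "\<And>x. 0 \<le> x \<Longrightarrow> (p has_real_derivative q x) (at x within {0..})"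
    and q: "continuous_on {0..} q" and ode: "\<And>x. 0 < x \<Longrightarrow> q x + eta * c * p x = - Psi (\<theta> x)"
    and lim: "(\<theta> \<longlongrightarrow> 1) at_top" "(p \<longlongrightarrow> 0) at_top"
    and init: "\<theta> 0 = ths c" "p 0 + eta * c * ths c = S_term eta Qp Qg c"
  shows "solves_Pc eta Qg Qp Psi ths c (\<lambda>x. if x \<le> 0 then ths c * exp (- c * x) else \<theta> x)"
    (is "solves_Pc _ _ _ _ _ _ ?\<Theta>")
proof -
  let ?u = "\<lambda>x. ths c * exp (- c * x)"
  have gas: "?\<Theta> x = \<theta> x" if "0 \<le> x" for x
    using that init by (cases "x = 0") auto
  have exp_lim: "((\<lambda>x. exp (- c * x)) \<longlongrightarrow> 0) at_bot"
    using c by (intro filterlim_compose[OF exp_at_bot] filterlim_tendsto_pos_mult_at_bot[OF tendsto_const]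
        filterlim_ident) auto
  have "?\<Theta> x \<in> {0..1}" for x
  proof (cases "x \<le> 0")
    case True
    then have "exp (- c * x) \<le> 1"
      using c by (simp add: mult_nonpos_nonpos)
    then show ?thesis
      using True c mult_left_mono[of "exp (- c * x)" 1 "ths c"] by auto
  qed (use range in auto)
  moreover have "continuous_on {0..} \<theta>"
    using d\<theta> by (auto simp: continuous_on_eq_continuous_within intro: DERIV_continuous)
  then have "continuous_on UNIV ?\<Theta>"
    using gas init(1)
    by (intro continuous_on_cases_le[where h="\<lambda>x. x" and a=0, simplified])
      (auto intro!: continuous_intros simp: atLeast_def)
  moreover have "(?\<Theta> has_real_derivative - c * ?u x) (at x within {..0})" if "x \<le> 0" for x
    by (rule has_field_derivative_transform_within[where f="?u" and d=1])
      (use that in \<open>auto intro!: derivative_eq_intros\<close>)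
  moreover have "(?\<Theta> has_real_derivative p x) (at x within {0..})" if "0 \<le> x" for x
    by (rule has_field_derivative_transform_within[OF d\<theta>[OF that], where d=1]) (use that gas in auto)
  moreover have "(?\<Theta> \<longlongrightarrow> 0) at_bot"
    using tendsto_mult_right_zero[OF exp_lim, of "ths c"]
    by (rule Lim_transform_eventually) (auto intro: eventually_mono[OF eventually_le_at_bot[of 0]])
  moreover have "(?\<Theta> \<longlongrightarrow> 1) at_top"
    using lim(1) eventually_gt_at_top[of 0] by (rule Lim_transform_eventually[OF _ eventually_mono]) simp
  moreover have "((\<lambda>x. - c * ?u x) \<longlongrightarrow> 0) at_bot"
    using tendsto_mult_right_zero[OF exp_lim, of "- c * ths c"] by (simp add: mult.assoc)
  ultimately show ?thesis
    using dp q ode gas init lim(2)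
    by (intro solves_PcI[where v="\<lambda>x. - c * ?u x" and v'="\<lambda>x. c * c * ?u x"])
      (auto intro!: derivative_eq_intros continuous_intros simp: S_term_def)
qed

lemma solves_Pc_gas_side:
  assumes sol: "solves_Pc eta Qg Qp Psi ths c \<theta>" and Psi: "continuous_on {0..1} Psi"
  obtains p q where "\<And>x. \<theta> x \<in> {0..1}"
    "\<And>x. 0 \<le> x \<Longrightarrow> (\<theta> has_real_derivative p x) (at x within {0..})"
    "\<And>x. 0 \<le> x \<Longrightarrow> (p has_real_derivative q x) (at x within {0..})"
    "\<And>x. 0 \<le> x \<Longrightarrow> q x + eta * c * p x = - Psi (\<theta> x)"
    "(\<theta> \<longlongrightarrow> 1) at_top" "(p \<longlongrightarrow> 0) at_top"
    "\<theta> 0 = ths c" "p 0 + eta * c * ths c = S_term eta Qp Qg c"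
proof -
  obtain d1 d2 p q where range: "\<And>x. \<theta> x \<in> {0..1}"
    and d\<theta>: "\<And>x. x \<le> 0 \<Longrightarrow> (\<theta> has_real_derivative d1 x) (at x within {..0})"
    and dd: "\<And>x. x \<le> 0 \<Longrightarrow> (d1 has_real_derivative d2 x) (at x within {..0})"
    and e\<theta>: "\<And>x. 0 \<le> x \<Longrightarrow> (\<theta> has_real_derivative p x) (at x within {0..})"
    and dp: "\<And>x. 0 \<le> x \<Longrightarrow> (p has_real_derivative q x) (at x within {0..})"
    and q: "continuous_on {0..} q"
    and solid: "\<And>x. x < 0 \<Longrightarrow> d2 x + c * d1 x = 0"
    and gas: "\<And>x. 0 < x \<Longrightarrow> q x + eta * c * p x = - Psi (\<theta> x)"
    and lim: "(\<theta> \<longlongrightarrow> 0) at_bot" "(\<theta> \<longlongrightarrow> 1) at_top" "(d1 \<longlongrightarrow> 0) at_bot" "(p \<longlongrightarrow> 0) at_top"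
    and \<theta>0: "\<theta> 0 = ths c"
    and interface: "p 0 - eta * d1 0 = S_term eta Qp Qg c"
    using sol unfolding solves_Pc_def by blast
  have "d1 0 = - c * \<theta> 0"
    by (rule solid_side_flux[OF d\<theta> dd solid lim(1,3)])
  then have "p 0 + eta * c * ths c = S_term eta Qp Qg c"
    using interface \<theta>0 by simp
  moreover have "q x + eta * c * p x = - Psi (\<theta> x)" if "0 \<le> x" for x
  proof (cases "x = 0")
    case True
    have "continuous_on {0..} \<theta>" "continuous_on {0..} p"
      using e\<theta> dp by (auto simp: continuous_on_eq_continuous_within intro: DERIV_continuous)
    then have "q 0 + eta * c * p 0 = - Psi (\<theta> 0)"
      using gas q range
      by (intro continuous_on_atLeast_eq_at_0[where f="\<lambda>x. q x + eta * c * p x" and g="\<lambda>x. - Psi (\<theta> x)"])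
        (auto intro!: continuous_intros continuous_on_compose2[OF Psi])
    then show ?thesis
      using True by simp
  qed (use that gas in auto)
  ultimately show ?thesis
    using that range e\<theta> dp lim(2,4) \<theta>0 by blast
qed

locale pyrolysis_problem =
  fixes eta Qg Qp :: real and Psi ths :: "real \<Rightarrow> real" and cmax cmin :: real
  assumes eta: "eta > 0" and Qg: "Qg > 0" and Qp: "Qp > 0"
    and Psi_smooth: "\<exists>g. smooth_real g \<and> (\<forall>x\<in>{0..1}. g x = Psi x)"
    and Psi_nonneg: "\<forall>x\<in>{0..1}. Psi x \<ge> 0"
    and Psi_pos: "\<forall>x\<in>{0..<1}. Psi x > 0"
    and Psi_1: "Psi 1 = 0"
    and ths_range: "\<forall>c\<in>{cmax..0}. ths c \<in> {0..1}"
    and ths_cont: "continuous_on {cmax..0} ths"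
    and ths_decr: "\<forall>a\<in>{cmax..0}. \<forall>b\<in>{cmax..0}. a < b \<longrightarrow> ths b < ths a"
    and ths_cmax: "ths cmax = 1"
    and cmin: "cmin \<in> {cmax<..<0}" and ths_cmin: "ths cmin = Qp / (Qg + Qp)"
begin

text \<open>\<open>\<Psi>\<close> is only prescribed on \<open>[0, 1]\<close>; extended by constants it becomes globally
  Lipschitz, so the gas-side system has global solutions.\<close>

definition Psi_ext :: "real \<Rightarrow> real" where
  "Psi_ext y = Psi (max 0 (min 1 y))"

definition kappa :: "real \<Rightarrow> real" where
  "kappa c = - eta * c"

text \<open>The interface balance, with the solid-side flux \<open>\<theta>'(0\<^sup>-) = - c \<theta>\<^sub>s(c)\<close>,
  fixes the gas-side slope \<open>\<theta>'(0\<^sup>+)\<close>.\<close>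

definition interface_slope :: "real \<Rightarrow> real" where
  "interface_slope c = kappa c * (ths c - Qp / (Qg + Qp))"

definition shot :: "real \<Rightarrow> real \<Rightarrow> real \<times> real" where
  "shot c = ode_sol (wave_field (kappa c) Psi_ext) (ths c, interface_slope c)"

lemma lipschitz_Psi_ext:
  obtains M where "M-lipschitz_on UNIV Psi_ext"
proof -
  obtain g M where g: "\<And>x. x \<in> {0..1} \<Longrightarrow> g x = Psi x" and M: "M-lipschitz_on {0..1} g"
    using Psi_smooth smooth_real_lipschitz_on_Icc by metis
  have "M-lipschitz_on {0..1} Psi"
    by (rule lipschitz_on_transform[OF M]) (simp add: g)
  then have "M-lipschitz_on ((\<lambda>y. max 0 (min 1 y)) ` UNIV) Psi"
    by (rule lipschitz_on_subset) auto
  moreover have "1-lipschitz_on UNIV (\<lambda>y::real. max 0 (min 1 y))"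
    by (rule lipschitz_onI) (auto simp: dist_real_def)
  ultimately have "(M * 1)-lipschitz_on UNIV Psi_ext"
    unfolding Psi_ext_def by (intro lipschitz_on_compose2)
  then show ?thesis
    using that by simp
qed

lemma continuous_on_Psi_ext: "continuous_on UNIV Psi_ext"
  using lipschitz_Psi_ext lipschitz_on_continuous_on by metis

lemma Psi_ext_eq: "y \<in> {0..1} \<Longrightarrow> Psi_ext y = Psi y"
  by (simp add: Psi_ext_def)

lemma continuous_on_Psi: "continuous_on {0..1} Psi"
proof -
  have "continuous_on {0..1} Psi_ext"
    by (rule continuous_on_subset[OF continuous_on_Psi_ext]) simp
  then show ?thesis
    by (rule continuous_on_eq) (simp add: Psi_ext_eq)
qed

lemma Psi_ext_nonneg: "0 \<le> Psi_ext y"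
  using Psi_nonneg by (simp add: Psi_ext_def)

lemma Psi_ext_above_1: "1 \<le> y \<Longrightarrow> Psi_ext y = 0"
  using Psi_1 by (simp add: Psi_ext_def)

lemma Psi_ext_pos: "y < 1 \<Longrightarrow> 0 < Psi_ext y"
  using Psi_pos by (simp add: Psi_ext_def)

lemma Psi_ext_le:
  assumes "M-lipschitz_on UNIV Psi_ext" "y \<in> {0..1}"
  shows "Psi_ext y \<le> M * (1 - y)"
  using lipschitz_on_normD[OF assms(1), of y 1] Psi_ext_above_1[of 1] assms(2) by simp

lemma kappa_nonneg: "c \<le> 0 \<Longrightarrow> 0 \<le> kappa c"
  using eta by (simp add: kappa_def mult_nonneg_nonpos)

lemma kappa_pos: "c < 0 \<Longrightarrow> 0 < kappa c"
  using eta by (simp add: kappa_def mult_pos_neg)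

lemma ths_less: "a \<in> {cmax..0} \<Longrightarrow> b \<in> {cmax..0} \<Longrightarrow> a < b \<Longrightarrow> ths b < ths a"
  using ths_decr by blast

lemma interface_slope_iff: "y + eta * c * ths c = S_term eta Qp Qg c \<longleftrightarrow> y = interface_slope c"
  by (auto simp: S_term_def interface_slope_def kappa_def add.commute algebra_simps)

lemma wave_orbit_shot:
  assumes "c \<le> 0"
  shows "wave_orbit (\<lambda>t. fst (shot c t)) (\<lambda>t. snd (shot c t)) (kappa c) Psi_ext"
proof -
  obtain M where "M-lipschitz_on UNIV Psi_ext"
    by (rule lipschitz_Psi_ext)
  then show ?thesis
    unfolding shot_def using kappa_nonneg[OF assms] Psi_ext_nonneg by (rule wave_orbit_ode_sol)
qed

lemma shot_0: "shot c 0 = (ths c, interface_slope c)"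
proof -
  obtain M where "M-lipschitz_on UNIV Psi_ext"
    by (rule lipschitz_Psi_ext)
  then show ?thesis
    unfolding shot_def by (rule ode_sol_0[OF lipschitz_on_wave_field])
qed

lemma continuous_on_shot: "0 \<le> t \<Longrightarrow> continuous_on {cmax..cmin} (\<lambda>c. shot c t)"
proof -
  obtain M where "M-lipschitz_on UNIV Psi_ext"
    by (rule lipschitz_Psi_ext)
  moreover have "continuous_on {cmax..cmin} (\<lambda>c. (ths c, interface_slope c))"
    using cmin unfolding interface_slope_def kappa_def
    by (intro continuous_intros continuous_on_subset[OF ths_cont]) auto
  ultimately show "0 \<le> t \<Longrightarrow> continuous_on {cmax..cmin} (\<lambda>c. shot c t)"
    unfolding shot_def by (intro continuous_on_wave_ode_sol_param) (auto simp: kappa_def intro!: continuous_intros)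
qed

lemma admissible_orbit:
  assumes c: "c \<in> {cmax..0}" and O: "wave_orbit \<theta> p (kappa c) Psi_ext"
    and range: "\<And>x. 0 \<le> x \<Longrightarrow> \<theta> x \<in> {0..1}" and p_lim: "(p \<longlongrightarrow> 0) at_top"
    and init: "\<theta> 0 = ths c" "p 0 = interface_slope c"
  shows "c \<in> {cmax<..<cmin}" and "\<And>x. 0 \<le> x \<Longrightarrow> 0 < p x \<and> \<theta> x < 1"
proof -
  interpret O: wave_orbit \<theta> p "kappa c" Psi_ext
    by (rule O)
  obtain M where M: "M-lipschitz_on UNIV Psi_ext"
    by (rule lipschitz_Psi_ext)
  have r: "0 < Qp / (Qg + Qp)" "Qp / (Qg + Qp) < 1"
    using Qg Qp by auto
  have not_rest: "\<not> (\<theta> 0 = 1 \<and> p 0 = 0)"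
  proof
    assume rest: "\<theta> 0 = 1 \<and> p 0 = 0"
    have "c = cmax"
      using rest init ths_less[of cmax c] c ths_cmax by (cases "c = cmax") auto
    then have "0 < p 0"
      using init ths_cmax kappa_pos[of cmax] cmin r by (simp add: interface_slope_def)
    then show False
      using rest by simp
  qed
  show pos: "0 < p x \<and> \<theta> x < 1" if "0 \<le> x" for x
    using O.p_pos[OF Psi_ext_pos Psi_ext_le[OF M] lipschitz_on_nonneg[OF M] range p_lim not_rest that]
      O.theta_lt_1[OF Psi_ext_pos Psi_ext_le[OF M] lipschitz_on_nonneg[OF M] range p_lim not_rest that]
    by simp
  have "c \<noteq> cmax"
    using pos[of 0] init ths_cmax by auto
  moreover have "0 < kappa c * (ths c - ths cmin)"
    using pos[of 0] init ths_cmin by (simp add: interface_slope_def)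
  then have "ths cmin < ths c"
    using kappa_nonneg[of c] c by (auto simp: zero_less_mult_iff)
  have "c < cmin"
  proof (rule ccontr)
    assume "\<not> c < cmin"
    then have "ths c \<le> ths cmin"
      using ths_less[of cmin c] c cmin by (cases "c = cmin") auto
    then show False
      using \<open>ths cmin < ths c\<close> by simp
  qed
  ultimately show "c \<in> {cmax<..<cmin}"
    using c by auto
qed

lemma admissible_orbits_not_ordered:
  assumes c: "c\<^sub>1 \<in> {cmax..0}" "c\<^sub>2 \<in> {cmax..0}" "c\<^sub>1 < c\<^sub>2"
    and O1: "wave_orbit \<theta>\<^sub>1 p\<^sub>1 (kappa c\<^sub>1) Psi_ext" and range1: "\<And>x. 0 \<le> x \<Longrightarrow> \<theta>\<^sub>1 x \<in> {0..1}"
    and lim1: "(\<theta>\<^sub>1 \<longlongrightarrow> 1) at_top" "(p\<^sub>1 \<longlongrightarrow> 0) at_top" and init1: "\<theta>\<^sub>1 0 = ths c\<^sub>1" "p\<^sub>1 0 = interface_slope c\<^sub>1"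
    and O2: "wave_orbit \<theta>\<^sub>2 p\<^sub>2 (kappa c\<^sub>2) Psi_ext" and range2: "\<And>x. 0 \<le> x \<Longrightarrow> \<theta>\<^sub>2 x \<in> {0..1}"
    and lim2: "(\<theta>\<^sub>2 \<longlongrightarrow> 1) at_top" "(p\<^sub>2 \<longlongrightarrow> 0) at_top" and init2: "\<theta>\<^sub>2 0 = ths c\<^sub>2" "p\<^sub>2 0 = interface_slope c\<^sub>2"
  shows False
proof (rule wave_orbit_comparison[OF O2 O1 _ lim2 _ lim1])
  note adm1 = admissible_orbit[OF c(1) O1 range1 lim1(2) init1]
  note adm2 = admissible_orbit[OF c(2) O2 range2 lim2(2) init2]
  show "\<And>x. 0 \<le> x \<Longrightarrow> 0 < p\<^sub>1 x \<and> \<theta>\<^sub>1 x < 1" "\<And>x. 0 \<le> x \<Longrightarrow> 0 < p\<^sub>2 x \<and> \<theta>\<^sub>2 x < 1"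
    using adm1(2) adm2(2) by auto
  show "p\<^sub>1 0 = kappa c\<^sub>1 * (\<theta>\<^sub>1 0 - Qp / (Qg + Qp))" "p\<^sub>2 0 = kappa c\<^sub>2 * (\<theta>\<^sub>2 0 - Qp / (Qg + Qp))"
    using init1 init2 by (simp_all add: interface_slope_def)
  show "kappa c\<^sub>2 < kappa c\<^sub>1"
    using c eta by (simp add: kappa_def)
  show "\<theta>\<^sub>2 0 < \<theta>\<^sub>1 0"
    using ths_less[OF c] init1 init2 by simp
  show "Qp / (Qg + Qp) < \<theta>\<^sub>1 0"
    using ths_less[of c\<^sub>1 cmin] adm1(1) cmin init1 ths_cmin by auto
qed

lemma orbit_of_solution:
  assumes c: "c \<in> {cmax..0}" and sol: "solves_Pc eta Qg Qp Psi ths c \<theta>"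
  obtains p where "wave_orbit \<theta> p (kappa c) Psi_ext" "\<And>x. 0 \<le> x \<Longrightarrow> \<theta> x \<in> {0..1}"
    "(\<theta> \<longlongrightarrow> 1) at_top" "(p \<longlongrightarrow> 0) at_top" "\<theta> 0 = ths c" "p 0 = interface_slope c"
proof -
  obtain p q where range: "\<And>x. \<theta> x \<in> {0..1}"
    and d\<theta>: "\<And>x. 0 \<le> x \<Longrightarrow> (\<theta> has_real_derivative p x) (at x within {0..})"
    and dp: "\<And>x. 0 \<le> x \<Longrightarrow> (p has_real_derivative q x) (at x within {0..})"
    and ode: "\<And>x. 0 \<le> x \<Longrightarrow> q x + eta * c * p x = - Psi (\<theta> x)"
    and lim: "(\<theta> \<longlongrightarrow> 1) at_top" "(p \<longlongrightarrow> 0) at_top"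
    and init: "\<theta> 0 = ths c" "p 0 + eta * c * ths c = S_term eta Qp Qg c"
    using solves_Pc_gas_side[OF sol continuous_on_Psi] by blast
  have "wave_orbit \<theta> p (kappa c) Psi_ext"
  proof (rule wave_orbit.intro)
    fix x :: real assume x: "0 \<le> x"
    show "(\<theta> has_real_derivative p x) (at x within {0..})"
      using d\<theta>[OF x] .
    have "q x = kappa c * p x - Psi_ext (\<theta> x)"
      using ode[OF x] Psi_ext_eq[OF range] by (simp add: kappa_def algebra_simps)
    then show "(p has_real_derivative kappa c * p x - Psi_ext (\<theta> x)) (at x within {0..})"
      using dp[OF x] by simp
  qed (use c kappa_nonneg Psi_ext_nonneg continuous_on_Psi_ext in auto)
  then show ?thesis
    using that range lim init interface_slope_iff by blast
qed

lemma solution_of_orbit: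
  assumes c: "c < 0" and O: "wave_orbit \<theta> p (kappa c) Psi_ext"
    and range: "\<And>x. 0 \<le> x \<Longrightarrow> \<theta> x \<in> {0..1}" and lim: "(\<theta> \<longlongrightarrow> 1) at_top" "(p \<longlongrightarrow> 0) at_top"
    and init: "\<theta> 0 = ths c" "p 0 = interface_slope c"
  shows "\<exists>\<Theta>. solves_Pc eta Qg Qp Psi ths c \<Theta>"
proof -
  interpret O: wave_orbit \<theta> p "kappa c" Psi_ext
    by (rule O)
  let ?q = "\<lambda>x. kappa c * p x - Psi_ext (\<theta> x)"
  have "continuous_on {0..} ?q"
    using O.continuous_on_theta
    by (intro continuous_intros O.continuous_on_p continuous_on_compose2[OF continuous_on_Psi_ext]) auto
  moreover have "?q x + eta * c * p x = - Psi (\<theta> x)" if "0 < x" for x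
    using that range[of x] Psi_ext_eq[of "\<theta> x"] by (simp add: kappa_def)
  moreover have "ths c \<in> {0..1}" "p 0 + eta * c * ths c = S_term eta Qp Qg c"
    using range[of 0] init interface_slope_iff by auto
  ultimately show ?thesis
    using solves_Pc_glue[where ths=ths and Psi=Psi, OF c _ range O.theta_deriv O.p_deriv _ _ lim init(1)]
    by blast
qed

definition overshoot_speeds :: "real set" where
  "overshoot_speeds = {c \<in> {cmax..cmin}. \<exists>y\<ge>0. 1 < fst (shot c y)}"

definition undershoot_speeds :: "real set" where
  "undershoot_speeds = {c \<in> {cmax..cmin}. \<exists>x\<ge>0. snd (shot c x) < 0 \<and> fst (shot c x) < 1}"

lemma openin_overshoot_speeds: "openin (top_of_set {cmax..cmin}) overshoot_speeds"
proof -
  have eq: "overshoot_speeds = (\<Union>y\<in>{0..}. {cmax..cmin} \<inter> (\<lambda>c. fst (shot c y)) -` {1<..})"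
    by (auto simp: overshoot_speeds_def)
  show ?thesis
    unfolding eq by (intro openin_Union) (auto intro!: continuous_openin_preimage_gen continuous_intros continuous_on_shot)
qed

lemma openin_undershoot_speeds: "openin (top_of_set {cmax..cmin}) undershoot_speeds"
proof -
  have eq: "undershoot_speeds = (\<Union>x\<in>{0..}. ({cmax..cmin} \<inter> (\<lambda>c. snd (shot c x)) -` {..<0})
      \<inter> ({cmax..cmin} \<inter> (\<lambda>c. fst (shot c x)) -` {..<1}))"
    by (auto simp: undershoot_speeds_def)
  show ?thesis
    unfolding eq by (intro openin_Union) (auto intro!: openin_Int continuous_openin_preimage_gen continuous_intros
        continuous_on_shot)
qed

lemma overshoot_undershoot_speeds_disjoint: "overshoot_speeds \<inter> undershoot_speeds = {}"
proof (rule ccontr)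
  assume "overshoot_speeds \<inter> undershoot_speeds \<noteq> {}"
  then obtain c y x where c: "c \<in> {cmax..cmin}" and "0 \<le> y" "1 < fst (shot c y)"
    and "0 \<le> x" "snd (shot c x) < 0" "fst (shot c x) < 1"
    unfolding overshoot_speeds_def undershoot_speeds_def by blast
  moreover have "fst (shot c 0) \<le> 1"
    using ths_range c cmin by (auto simp: shot_0)
  ultimately show False
    using wave_orbit.not_overshoot_and_undershoot[OF wave_orbit_shot Psi_ext_above_1] c cmin by force
qed

lemma cmax_overshoots: "cmax \<in> overshoot_speeds"
proof -
  have "0 < snd (shot cmax 0)" "fst (shot cmax 0) = 1"
    using kappa_pos[of cmax] cmin Qg Qp ths_cmax by (simp_all add: shot_0 interface_slope_def)
  then obtain y where "0 \<le> y" "1 < fst (shot cmax y)"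
    using wave_orbit.overshoot_start[OF wave_orbit_shot, of cmax] cmin by auto
  then show ?thesis
    using cmin unfolding overshoot_speeds_def by auto
qed

lemma cmin_undershoots: "cmin \<in> undershoot_speeds"
proof -
  have "fst (shot cmin 0) < 1" "snd (shot cmin 0) = 0" "0 < Psi_ext (fst (shot cmin 0))"
    using ths_cmin Qg Qp Psi_ext_pos by (auto simp: shot_0 interface_slope_def)
  then obtain x where "0 \<le> x" "snd (shot cmin x) < 0" "fst (shot cmin x) < 1"
    using wave_orbit.undershoot_start[OF wave_orbit_shot, of cmin] cmin by auto
  then show ?thesis
    using cmin unfolding undershoot_speeds_def by auto
qed

lemma shooting_speed:
  obtains c where "c \<in> {cmax<..<cmin}" "\<And>y. 0 \<le> y \<Longrightarrow> fst (shot c y) \<le> 1"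
    "\<And>x. 0 \<le> x \<Longrightarrow> fst (shot c x) < 1 \<Longrightarrow> 0 \<le> snd (shot c x)"
proof -
  have "\<not> {cmax..cmin} \<subseteq> overshoot_speeds \<union> undershoot_speeds"
    using connected_openin[of "{cmax..cmin}"] connected_Icc openin_overshoot_speeds openin_undershoot_speeds
      overshoot_undershoot_speeds_disjoint cmax_overshoots cmin_undershoots by blast
  then obtain c where c: "c \<in> {cmax..cmin}" "c \<notin> overshoot_speeds" "c \<notin> undershoot_speeds"
    by blast
  then have "c \<in> {cmax<..<cmin}"
    using cmax_overshoots cmin_undershoots by (cases "c = cmax"; cases "c = cmin") auto
  moreover have "fst (shot c y) \<le> 1" if "0 \<le> y" for y
    using c that unfolding overshoot_speeds_def by force
  moreover have "0 \<le> snd (shot c x)" if "0 \<le> x" "fst (shot c x) < 1" for x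
    using c that unfolding undershoot_speeds_def by (auto simp: not_less[symmetric])
  ultimately show ?thesis
    using that by blast
qed

lemma solution_exists:
  obtains c where "c \<in> {cmax<..<cmin}" "\<exists>\<theta>. solves_Pc eta Qg Qp Psi ths c \<theta>"
proof -
  obtain c where c: "c \<in> {cmax<..<cmin}" and no_overshoot: "\<And>y. 0 \<le> y \<Longrightarrow> fst (shot c y) \<le> 1"
    and no_undershoot: "\<And>x. 0 \<le> x \<Longrightarrow> fst (shot c x) < 1 \<Longrightarrow> 0 \<le> snd (shot c x)"
    using shooting_speed by blast
  have c0: "c < 0" "0 \<le> fst (shot c 0)"
    using c cmin ths_range by (auto simp: shot_0)
  note orbit = wave_orbit_shot[OF less_imp_le[OF c0(1)]]
  note admissible = Psi_ext_above_1 Psi_ext_pos kappa_pos[OF c0(1)] c0(2) no_overshoot no_undershoot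
  have "\<exists>\<theta>. solves_Pc eta Qg Qp Psi ths c \<theta>"
    by (rule solution_of_orbit[OF c0(1) orbit wave_orbit.theta_in_unit_interval[OF orbit admissible]
          wave_orbit.theta_tendsto_1[OF orbit admissible] wave_orbit.p_tendsto_0[OF orbit admissible]])
      (simp_all add: shot_0)
  then show ?thesis
    using that c by blast
qed

lemma solution_speed_unique:
  assumes c: "c\<^sub>1 \<in> {cmax..0}" "c\<^sub>2 \<in> {cmax..0}"
    and sol: "solves_Pc eta Qg Qp Psi ths c\<^sub>1 \<theta>\<^sub>1" "solves_Pc eta Qg Qp Psi ths c\<^sub>2 \<theta>\<^sub>2"
  shows "c\<^sub>1 = c\<^sub>2"
proof -
  obtain p\<^sub>1 where orbit1: "wave_orbit \<theta>\<^sub>1 p\<^sub>1 (kappa c\<^sub>1) Psi_ext" "\<And>x. 0 \<le> x \<Longrightarrow> \<theta>\<^sub>1 x \<in> {0..1}"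
    "(\<theta>\<^sub>1 \<longlongrightarrow> 1) at_top" "(p\<^sub>1 \<longlongrightarrow> 0) at_top" "\<theta>\<^sub>1 0 = ths c\<^sub>1" "p\<^sub>1 0 = interface_slope c\<^sub>1"
    using orbit_of_solution[OF c(1) sol(1)] by blast
  obtain p\<^sub>2 where orbit2: "wave_orbit \<theta>\<^sub>2 p\<^sub>2 (kappa c\<^sub>2) Psi_ext" "\<And>x. 0 \<le> x \<Longrightarrow> \<theta>\<^sub>2 x \<in> {0..1}"
    "(\<theta>\<^sub>2 \<longlongrightarrow> 1) at_top" "(p\<^sub>2 \<longlongrightarrow> 0) at_top" "\<theta>\<^sub>2 0 = ths c\<^sub>2" "p\<^sub>2 0 = interface_slope c\<^sub>2"
    using orbit_of_solution[OF c(2) sol(2)] by blast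
  show ?thesis
  proof (cases c\<^sub>1 c\<^sub>2 rule: linorder_cases)
    case less
    then show ?thesis
      using admissible_orbits_not_ordered[OF c less orbit1 orbit2] by blast
  next
    case greater
    then show ?thesis
      using admissible_orbits_not_ordered[OF c(2,1) greater orbit2 orbit1] by blast
  qed
qed

end

theorem proposition8:
  fixes eta Qg Qp cmax cmin :: real
    and Psi ths :: "real \<Rightarrow> real"
  assumes eta: "eta > 0" and Qg: "Qg > 0" and Qp: "Qp > 0"
    and Psi_smooth: "\<exists>g. smooth_real g \<and> (\<forall>x\<in>{0..1}. g x = Psi x)"
    and Psi_nonneg: "\<forall>x\<in>{0..1}. Psi x \<ge> 0"
    and Psi_pos: "\<forall>x\<in>{0..<1}. Psi x > 0"
    and Psi_1: "Psi 1 = 0"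
    and cmax: "cmax < 0"
    and ths_range: "\<forall>c\<in>{cmax..0}. ths c \<in> {0..1}"
    and ths_cont: "continuous_on {cmax..0} ths"
    and ths_decr: "\<forall>a\<in>{cmax..0}. \<forall>b\<in>{cmax..0}. a < b \<longrightarrow> ths b < ths a"
    and ths_0: "ths 0 = 0" and ths_cmax: "ths cmax = 1"
    and ths_smooth: "\<exists>g. smooth_on_open {..<0} g \<and> (\<forall>c\<in>{cmax..<0}. g c = ths c)
                         \<and> (\<forall>c\<in>{cmax..<0}. deriv g c < 0)"
    and cmin: "cmin \<in> {cmax<..<0}" and ths_cmin: "ths cmin = Qp / (Qg + Qp)"
  shows "\<exists>c. c \<in> {cmax<..<cmin} \<and> (\<exists>theta. solves_Pc eta Qg Qp Psi ths c theta) \<and>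
           (\<forall>c'\<in>{cmax..0}. (\<exists>theta. solves_Pc eta Qg Qp Psi ths c' theta) \<longrightarrow> c' = c)"
proof -
  interpret pyrolysis_problem eta Qg Qp Psi ths cmax cmin
    using eta Qg Qp Psi_smooth Psi_nonneg Psi_pos Psi_1 ths_range ths_cont ths_decr ths_cmax cmin ths_cmin
    by unfold_locales
  obtain c where c: "c \<in> {cmax<..<cmin}" and sol: "\<exists>\<theta>. solves_Pc eta Qg Qp Psi ths c \<theta>"
    by (rule solution_exists)
  have "c \<in> {cmax..0}"
    using c cmin by auto
  then have "c' = c" if "c' \<in> {cmax..0}" "\<exists>\<theta>. solves_Pc eta Qg Qp Psi ths c' \<theta>" for c'
    using solution_speed_unique that sol by blast
  then show ?thesis
    using c sol by blast
qed

end
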